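(* Let $E$ be a Hausdorff topological vector space over $\mathbb{R}$ and let $A$ be a topologically independent subset of (the additive topological group of) $E$. Then $\langle A\rangle$ is the Tychonoff direct sum $\bigoplus_{a\in A}\langle a\rangle$ if and only if the topology of the linear span $\langle A\rangle_{\mathbb{R}}$ (with the subspace topology from $E$) is weak.
   Context: $\langle A\rangle$ is the additive subgroup generated by $A$ and $\langle A\rangle_{\mathbb{R}}$ its real linear span, both with subspace topology. A subset $A$ of an abelian topological group $G$ (neutral element $0$) is topologically independent if $0\notin A$ and for every neighborhood $W$ of $0$ there is a neighborhood $U$ of $0$ such that for every finite $F\subseteq A$ and every family of integers $\{z_a: a\in F\}$, the condition $\sum_{a\in F}z_a a\in U$ implies $z_a a\in W$ for all $a\in F$. The Tychonoff direct sum $\bigoplus_{a\in A}\langle a\rangle$ is the direct sum of the groups $\langle a\rangle$ (subspace topology) with the topology induced from the product $\prod_{a\in A}\langle a\rangle$; "$\langle A\rangle$ is the Tychonoff direct sum" means the map $(g_a)\mapsto\sum_a g_a$ is an isomorphism of topological groups from $\bigoplus_{a\in A}\langle a\rangle$ onto $\langle A\rangle$. The topology of a topological vector space $X$ is weak if it coincides with the coarsest topology making all continuous linear functionals on $X$ continuous. *)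

theory Defs
  imports "HOL-Analysis.Analysis"
begin

definition tvs_ops_continuous :: "('a::{real_vector,topological_space}) itself \<Rightarrow> bool" where
  "tvs_ops_continuous _ \<longleftrightarrow>
     continuous_on UNIV (\<lambda>p::'a \<times> 'a. fst p + snd p) \<and>
     continuous_on UNIV (\<lambda>p::real \<times> 'a. fst p *\<^sub>R snd p)"

definition zspan :: "'a::real_vector set \<Rightarrow> 'a set" where
  "zspan A = {(\<Sum>a\<in>F. of_int (z a) *\<^sub>R a) | F z. finite F \<and> F \<subseteq> A}"

definition top_independent :: "'a::{real_vector,topological_space} set \<Rightarrow> bool" where
  "top_independent A \<longleftrightarrow> 0 \<notin> A \<and>
     (\<forall>W. open W \<and> 0 \<in> W \<longrightarrow>
        (\<exists>U. open U \<and> 0 \<in> U \<and>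
           (\<forall>F (z::'a \<Rightarrow> int). finite F \<and> F \<subseteq> A \<and> (\<Sum>a\<in>F. of_int (z a) *\<^sub>R a) \<in> U
               \<longrightarrow> (\<forall>a\<in>F. of_int (z a) *\<^sub>R a \<in> W))))"

text \<open>Underlying set of the direct sum: finitely supported elements of the product of the
  cyclic groups (with Isabelle's extensional convention for \<open>PiE\<close>).\<close>
definition dsum_carrier :: "'a::real_vector set \<Rightarrow> ('a \<Rightarrow> 'a) set" where
  "dsum_carrier A = {g \<in> (\<Pi>\<^sub>E a\<in>A. zspan {a}). finite {a\<in>A. g a \<noteq> 0}}"

definition tychonoff_dsum :: "'a::{real_vector,topological_space} set \<Rightarrow> ('a \<Rightarrow> 'a) topology" where
  "tychonoff_dsum A =
     subtopology (product_topology (\<lambda>a. subtopology euclidean (zspan {a})) A) (dsum_carrier A)"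

definition dsum_map :: "'a::real_vector set \<Rightarrow> ('a \<Rightarrow> 'a) \<Rightarrow> 'a" where
  "dsum_map A g = (\<Sum>a\<in>{a\<in>A. g a \<noteq> 0}. g a)"

text \<open>\<open>\<langle>A\<rangle>\<close> is the Tychonoff direct sum: the summation map is an isomorphism of
  topological groups (it is always an additive homomorphism; we require it to be a homeomorphism,
  which includes bijectivity).\<close>
definition is_tychonoff_dsum :: "'a::{real_vector,topological_space} set \<Rightarrow> bool" where
  "is_tychonoff_dsum A \<longleftrightarrow>
     homeomorphic_map (tychonoff_dsum A) (subtopology euclidean (zspan A)) (dsum_map A)"

definition linear_on :: "'a::real_vector set \<Rightarrow> ('a \<Rightarrow> real) \<Rightarrow> bool" where
  "linear_on X f \<longleftrightarrow> (\<forall>x\<in>X. \<forall>y\<in>X. f (x + y) = f x + f y) \<and> (\<forall>c. \<forall>x\<in>X. f (c *\<^sub>R x) = c * f x)"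

definition cont_lin_functionals :: "'a::{real_vector,topological_space} set \<Rightarrow> ('a \<Rightarrow> real) set" where
  "cont_lin_functionals X = {f. linear_on X f \<and> continuous_map (subtopology euclidean X) euclideanreal f}"

definition weak_topology_on :: "'a::{real_vector,topological_space} set \<Rightarrow> bool" where
  "weak_topology_on X \<longleftrightarrow>
     subtopology euclidean X =
     topology_generated_by {X \<inter> f -` V | f V. f \<in> cont_lin_functionals X \<and> open V}"

end

theory Submission
  imports Defs
begin

text \<open>Both sides are equivalent to the following smallness of \<open>A\<close>: every neighbourhood of \<open>0\<close>
  contains the subgroup generated by all but finitely many elements of \<open>A\<close>. For the direct sum
  this is continuity of the summation map at \<open>0\<close>; topological independence makes the summation
  map injective and open. Dividing by large integers, the same smallness then holds for the
  linear spans of the tails, so coefficients are bounded near \<open>0\<close>, \<open>A\<close> is linearly independent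
  and the coordinate functionals are continuous; a small coordinate box on finitely many elements
  plus a small tail is a weak neighbourhood. Conversely, in a weak topology a continuous linear
  functional \<open>f\<close> vanishes on all but finitely many elements of \<open>A\<close>: otherwise finitely many
  functionals controlling a neighbourhood have a common kernel vector on elements where
  \<open>f \<noteq> 0\<close>, Dirichlet's simultaneous approximation turns it into integer combinations in that
  neighbourhood with arbitrarily large coefficient at some \<open>b\<^sub>0\<close>, and topological independence
  then bounds \<open>\<bar>f\<bar>\<close> on arbitrarily large multiples of \<open>b\<^sub>0\<close>.\<close>

section \<open>Topological vector spaces\<close>

context
  assumes tvs: "tvs_ops_continuous TYPE('a::{real_vector,topological_space})"
begin

lemma tvs_continuous_add:
  fixes f g :: "'b::topological_space \<Rightarrow> 'a"
  assumes "continuous_on UNIV f" "continuous_on UNIV g"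
  shows "continuous_on UNIV (\<lambda>x. f x + g x)"
proof -
  have "continuous_on UNIV (\<lambda>p::'a \<times> 'a. fst p + snd p)"
    using tvs by (simp add: tvs_ops_continuous_def)
  from continuous_on_compose[OF continuous_on_Pair[OF assms] continuous_on_subset[OF this]]
  show ?thesis by (simp add: o_def)
qed

lemma tvs_continuous_scaleR:
  fixes f :: "'b::topological_space \<Rightarrow> 'a" and c :: "'b \<Rightarrow> real"
  assumes "continuous_on UNIV c" "continuous_on UNIV f"
  shows "continuous_on UNIV (\<lambda>x. c x *\<^sub>R f x)"
proof -
  have "continuous_on UNIV (\<lambda>p::real \<times> 'a. fst p *\<^sub>R snd p)"
    using tvs by (simp add: tvs_ops_continuous_def)
  from continuous_on_compose[OF continuous_on_Pair[OF assms] continuous_on_subset[OF this]]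
  show ?thesis by (simp add: o_def)
qed

lemma tvs_open_affine_vimage:
  fixes S :: "'a set"
  assumes "open S"
  shows "open ((\<lambda>y. c *\<^sub>R y + d) -` S)"
  by (intro open_vimage assms tvs_continuous_add tvs_continuous_scaleR continuous_on_const continuous_on_id)

lemma tvs_open_translation_vimage:
  fixes S :: "'a set"
  assumes "open S"
  shows "open ((\<lambda>y. y + d) -` S)"
  using tvs_open_affine_vimage[OF assms, of 1 d] by simp

lemma tvs_add_nhds:
  fixes W :: "'a set"
  assumes "open W" "0 \<in> W"
  obtains N where "open N" "0 \<in> N" "\<And>x y. x \<in> N \<Longrightarrow> y \<in> N \<Longrightarrow> x + y \<in> W"
proof -
  let ?add = "\<lambda>p::'a \<times> 'a. fst p + snd p"
  have "open (?add -` W)"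
    using tvs assms(1) by (simp add: tvs_ops_continuous_def open_vimage)
  moreover have "(0, 0) \<in> ?add -` W" using assms(2) by simp
  ultimately have "\<exists>A B. open A \<and> open B \<and> (0, 0) \<in> A \<times> B \<and> A \<times> B \<subseteq> ?add -` W"
    unfolding open_prod_def by (rule bspec)
  then obtain A B where "open A" "open B" "(0, 0) \<in> A \<times> B" "A \<times> B \<subseteq> ?add -` W"
    by blast
  then show ?thesis by (intro that[of "A \<inter> B"]) auto
qed

lemma tvs_add3_nhds:
  fixes W :: "'a set"
  assumes "open W" "0 \<in> W"
  obtains N where "open N" "0 \<in> N" "\<And>x y z. x \<in> N \<Longrightarrow> y \<in> N \<Longrightarrow> z \<in> N \<Longrightarrow> x + y + z \<in> W"
proof -
  obtain M where M: "open M" "0 \<in> M" "\<And>x y. x \<in> M \<Longrightarrow> y \<in> M \<Longrightarrow> x + y \<in> W"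
    using tvs_add_nhds[OF assms] by blast
  obtain N where N: "open N" "0 \<in> N" "\<And>x y. x \<in> N \<Longrightarrow> y \<in> N \<Longrightarrow> x + y \<in> M"
    using tvs_add_nhds[OF M(1,2)] by blast
  have "N \<subseteq> M" using N(2,3) by force
  with M N show ?thesis by (intro that[of N]) auto
qed

lemma tvs_scaleR_nhds:
  fixes W :: "'a set"
  assumes "open W" "0 \<in> W"
  obtains d N where "d > 0" "open N" "0 \<in> N" "\<And>t x. \<bar>t\<bar> < d \<Longrightarrow> x \<in> N \<Longrightarrow> t *\<^sub>R x \<in> W"
proof -
  let ?scale = "\<lambda>p::real \<times> 'a. fst p *\<^sub>R snd p"
  have "open (?scale -` W)"
    using tvs assms(1) by (simp add: tvs_ops_continuous_def open_vimage)
  moreover have "(0, 0) \<in> ?scale -` W" using assms(2) by simp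
  ultimately have "\<exists>A B. open A \<and> open B \<and> (0, 0) \<in> A \<times> B \<and> A \<times> B \<subseteq> ?scale -` W"
    unfolding open_prod_def by (rule bspec)
  then obtain A B where AB: "open A" "open B" "(0, 0) \<in> A \<times> B" "A \<times> B \<subseteq> ?scale -` W"
    by blast
  then obtain d where d: "d > 0" "ball 0 d \<subseteq> A" using openE[of A 0] by auto
  have "t *\<^sub>R x \<in> W" if "\<bar>t\<bar> < d" "x \<in> B" for t x
  proof -
    have "(t, x) \<in> A \<times> B" using that d(2) by (auto simp: dist_real_def)
    then show ?thesis using AB(4) by auto
  qed
  with AB d show ?thesis by (intro that[of d B]) auto
qed

lemma tvs_bounded_scaleR_nhds:
  fixes W :: "'a set" and K :: real
  assumes "open W" "0 \<in> W"
  obtains Q where "open Q" "0 \<in> Q" "\<And>s y. \<bar>s\<bar> \<le> K \<Longrightarrow> y \<in> Q \<Longrightarrow> s *\<^sub>R y \<in> W"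
proof -
  obtain d N where dN: "d > 0" "open N" "0 \<in> N" "\<And>t x. \<bar>t\<bar> < d \<Longrightarrow> x \<in> N \<Longrightarrow> t *\<^sub>R x \<in> W"
    using tvs_scaleR_nhds[OF assms] by blast
  define L where "L = \<bar>K\<bar> + 1"
  have L: "L > 0" "\<bar>K\<bar> < L" unfolding L_def by auto
  define Q where "Q = (\<lambda>y. (L / d) *\<^sub>R y) -` N"
  have "s *\<^sub>R y \<in> W" if s: "\<bar>s\<bar> \<le> K" and y: "y \<in> Q" for s y
  proof -
    have "\<bar>s * d / L\<bar> < d"
      using s L dN(1) by (simp add: abs_mult divide_less_eq mult_strict_right_mono)
    moreover have "(L / d) *\<^sub>R y \<in> N" using y by (simp add: Q_def)
    ultimately have "(s * d / L) *\<^sub>R ((L / d) *\<^sub>R y) \<in> W" by (rule dN(4))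
    then show ?thesis using dN(1) L(1) by simp
  qed
  moreover have "open Q" using tvs_open_affine_vimage[OF dN(2), of "L / d" 0] by (simp add: Q_def)
  moreover have "0 \<in> Q" using dN(3) by (simp add: Q_def)
  ultimately show ?thesis using that by blast
qed

lemma tvs_small_multiples:
  fixes W :: "'a set"
  assumes "open W" "0 \<in> W"
  obtains d where "d > 0" "\<And>t. \<bar>t\<bar> < d \<Longrightarrow> t *\<^sub>R x \<in> W"
proof -
  have "open ((\<lambda>t. t *\<^sub>R x) -` W)"
    by (intro open_vimage assms(1) tvs_continuous_scaleR continuous_on_id continuous_on_const)
  moreover have "0 \<in> (\<lambda>t. t *\<^sub>R x) -` W" using assms(2) by simp
  ultimately obtain d where "d > 0" "ball 0 d \<subseteq> (\<lambda>t. t *\<^sub>R x) -` W"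
    using openE by blast
  then show ?thesis by (intro that[of d]) (auto simp: dist_real_def)
qed

lemma tvs_small_combinations:
  fixes W G :: "'a set"
  assumes "finite G" "open W" "0 \<in> W"
  obtains d where "d > 0" "\<And>r. (\<And>b. b \<in> G \<Longrightarrow> \<bar>r b\<bar> < d) \<Longrightarrow> (\<Sum>b\<in>G. r b *\<^sub>R b) \<in> W"
  using assms
proof (induction G arbitrary: W thesis rule: finite_induct)
  case empty
  show ?case by (rule empty.prems(1)[of 1]) (use empty.prems in auto)
next
  case (insert b G)
  obtain N where N: "open N" "0 \<in> N" "\<And>x y. x \<in> N \<Longrightarrow> y \<in> N \<Longrightarrow> x + y \<in> W"
    using tvs_add_nhds[OF insert.prems(2,3)] by blast
  obtain d1 where d1: "d1 > 0" "\<And>r. (\<And>b. b \<in> G \<Longrightarrow> \<bar>r b\<bar> < d1) \<Longrightarrow> (\<Sum>b\<in>G. r b *\<^sub>R b) \<in> N"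
    using insert.IH[OF _ N(1,2)] by blast
  obtain d2 where d2: "d2 > 0" "\<And>t. \<bar>t\<bar> < d2 \<Longrightarrow> t *\<^sub>R b \<in> N"
    using tvs_small_multiples[OF N(1,2)] by blast
  show ?case
  proof (rule insert.prems(1)[of "min d1 d2"])
    fix r assume "\<And>c. c \<in> insert b G \<Longrightarrow> \<bar>r c\<bar> < min d1 d2"
    then have "r b *\<^sub>R b \<in> N" "(\<Sum>c\<in>G. r c *\<^sub>R c) \<in> N" using d1 d2 by auto
    then show "(\<Sum>c\<in>insert b G. r c *\<^sub>R c) \<in> W" using insert.hyps N(3) by simp
  qed (use d1 d2 in simp)
qed

end

section \<open>Topologically independent sets\<close>

lemma zspanI: "finite F \<Longrightarrow> F \<subseteq> A \<Longrightarrow> (\<Sum>b\<in>F. of_int (z b) *\<^sub>R b) \<in> zspan A"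
  unfolding zspan_def by blast

lemma zspanE:
  assumes "x \<in> zspan A"
  obtains F z where "finite F" "F \<subseteq> A" "x = (\<Sum>b\<in>F. of_int (z b) *\<^sub>R b)"
  using assms unfolding zspan_def by blast

lemma zspan_singleton: "zspan {a} = range (\<lambda>k::int. of_int k *\<^sub>R a)"
proof (intro antisym subsetI)
  fix x assume "x \<in> zspan {a}"
  then obtain F z where F: "F \<subseteq> {a}" and x: "x = (\<Sum>b\<in>F. of_int (z b) *\<^sub>R b)"
    by (rule zspanE)
  from F have "F = {} \<or> F = {a}" by blast
  with x show "x \<in> range (\<lambda>k::int. of_int k *\<^sub>R a)" by (auto intro: image_eqI[where x = 0])
next
  fix x assume "x \<in> range (\<lambda>k::int. of_int k *\<^sub>R a)"
  then obtain k where "x = of_int k *\<^sub>R a" by auto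
  then show "x \<in> zspan {a}" using zspanI[of "{a}" "{a}" "\<lambda>_. k"] by simp
qed

lemma int_multiple_in_zspan_singleton: "of_int k *\<^sub>R a \<in> zspan {a}"
  unfolding zspan_singleton by (rule rangeI)

lemma zero_in_zspan: "0 \<in> zspan A"
  using zspanI[of "{}" A] by simp

lemma top_independentE:
  assumes "top_independent A" "open W" "0 \<in> W"
  obtains U where "open U" "0 \<in> U"
    "\<And>F z a. finite F \<Longrightarrow> F \<subseteq> A \<Longrightarrow> (\<Sum>b\<in>F. of_int (z b) *\<^sub>R b) \<in> U \<Longrightarrow> a \<in> F \<Longrightarrow>
       of_int (z a) *\<^sub>R a \<in> W"
proof -
  obtain U where U: "open U" "0 \<in> U"
    "\<forall>F (z::'a \<Rightarrow> int). finite F \<and> F \<subseteq> A \<and> (\<Sum>b\<in>F. of_int (z b) *\<^sub>R b) \<in> U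
       \<longrightarrow> (\<forall>a\<in>F. of_int (z a) *\<^sub>R a \<in> W)"
    using assms unfolding top_independent_def by blast
  show ?thesis by (rule that[OF U(1,2)]) (use U(3) in blast)
qed

definition isolating_nhd :: "'a::{real_vector,topological_space} set \<Rightarrow> 'a set \<Rightarrow> 'a set \<Rightarrow> bool" where
  "isolating_nhd A F U \<longleftrightarrow> open U \<and> 0 \<in> U \<and>
     (\<forall>H (z::'a \<Rightarrow> int) a. finite H \<and> H \<subseteq> A \<and> (\<Sum>b\<in>H. of_int (z b) *\<^sub>R b) \<in> U \<and> a \<in> H \<inter> F
        \<longrightarrow> z a = 0)"

lemma isolating_nhd_coeff_eq_0:
  assumes "isolating_nhd A F U" "finite H" "H \<subseteq> A" "(\<Sum>b\<in>H. of_int (z b) *\<^sub>R b) \<in> U" "a \<in> H" "a \<in> F"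
  shows "z a = 0"
  using assms unfolding isolating_nhd_def by blast

lemma isolating_nhd_int_multiple:
  assumes "isolating_nhd A F U" "a \<in> A" "a \<in> F" "of_int k *\<^sub>R a \<in> U"
  shows "k = 0"
  using isolating_nhd_coeff_eq_0[OF assms(1), of "{a}" "\<lambda>_. k" a] assms(2-4) by simp

context
  assumes tvs: "tvs_ops_continuous TYPE('a::{real_vector,t1_space})"
begin

lemma tvs_int_multiples_isolated:
  fixes a :: 'a
  assumes "a \<noteq> 0"
  obtains W where "open W" "0 \<in> W" "\<And>k::int. of_int k *\<^sub>R a \<in> W \<Longrightarrow> k = 0"
proof -
  obtain W1 where W1: "open W1" "0 \<in> W1" "a \<notin> W1"
    using separation_t1[of 0 a] assms by auto
  obtain Q where Q: "open Q" "0 \<in> Q" "\<And>s y. \<bar>s\<bar> \<le> 1 \<Longrightarrow> y \<in> Q \<Longrightarrow> s *\<^sub>R y \<in> W1"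
    using tvs_bounded_scaleR_nhds[OF tvs W1(1,2)] by blast
  have isolated: "k = 0" if "of_int k *\<^sub>R a \<in> Q" for k :: int
  proof (rule ccontr)
    assume "k \<noteq> 0"
    then have "\<bar>1 / of_int k\<bar> \<le> (1::real)" by simp
    then have "(1 / of_int k) *\<^sub>R (of_int k *\<^sub>R a) \<in> W1" using Q(3) that by blast
    with \<open>k \<noteq> 0\<close> W1(3) show False by simp
  qed
  show ?thesis by (rule that[OF Q(1,2) isolated])
qed

lemma tvs_int_multiples_isolated_finite:
  fixes F :: "'a set"
  assumes "finite F" "0 \<notin> F"
  shows "\<exists>W. open W \<and> 0 \<in> W \<and> (\<forall>a\<in>F. \<forall>k::int. of_int k *\<^sub>R a \<in> W \<longrightarrow> k = 0)"
  using assms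
proof (induction F rule: finite_induct)
  case empty
  show ?case by (rule exI[of _ UNIV]) simp
next
  case (insert b F)
  have "b \<noteq> 0" "0 \<notin> F" using insert.prems by auto
  from insert.IH[OF \<open>0 \<notin> F\<close>] obtain W1 where
    W1: "open W1" "0 \<in> W1" "\<forall>a\<in>F. \<forall>k::int. of_int k *\<^sub>R a \<in> W1 \<longrightarrow> k = 0"
    by (elim exE conjE) (rule that)
  obtain W2 where W2: "open W2" "0 \<in> W2" "\<And>k::int. of_int k *\<^sub>R b \<in> W2 \<Longrightarrow> k = 0"
    by (rule tvs_int_multiples_isolated[OF \<open>b \<noteq> 0\<close>]) (rule that)
  show ?case
  proof (intro exI[of _ "W1 \<inter> W2"] conjI ballI allI impI)
    fix a and k :: int
    assume "a \<in> insert b F" "of_int k *\<^sub>R a \<in> W1 \<inter> W2"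
    then consider "of_int k *\<^sub>R b \<in> W2" | "a \<in> F" "of_int k *\<^sub>R a \<in> W1" by blast
    then show "k = 0"
      by cases (fact W2(3), use W1(3) in blast)
  qed (use W1(1,2) W2(1,2) in auto)
qed

lemma top_independent_isolating_nhd:
  fixes A :: "'a set"
  assumes "top_independent A" "finite F" "F \<subseteq> A"
  obtains U where "isolating_nhd A F U"
proof -
  have "0 \<notin> F" using assms(1,3) unfolding top_independent_def by blast
  obtain W where W: "open W" "0 \<in> W" "\<forall>a\<in>F. \<forall>k::int. of_int k *\<^sub>R a \<in> W \<longrightarrow> k = 0"
    using tvs_int_multiples_isolated_finite[OF assms(2) \<open>0 \<notin> F\<close>] by (elim exE conjE) (rule that)
  obtain U where U: "open U" "0 \<in> U"
    "\<And>H z a. finite H \<Longrightarrow> H \<subseteq> A \<Longrightarrow> (\<Sum>b\<in>H. of_int (z b) *\<^sub>R b) \<in> U \<Longrightarrow> a \<in> H \<Longrightarrow>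
       of_int (z a) *\<^sub>R a \<in> W"
    by (rule top_independentE[OF assms(1) W(1,2)]) (rule that)
  have "isolating_nhd A F U"
    unfolding isolating_nhd_def
  proof (intro conjI allI impI U(1,2))
    fix H and z :: "'a \<Rightarrow> int" and a
    assume H: "finite H \<and> H \<subseteq> A \<and> (\<Sum>b\<in>H. of_int (z b) *\<^sub>R b) \<in> U \<and> a \<in> H \<inter> F"
    then have "of_int (z a) *\<^sub>R a \<in> W" by (intro U(3)) auto
    then show "z a = 0" using H W(3)[rule_format, of a "z a"] by auto
  qed
  then show ?thesis by (rule that)
qed

end

section \<open>The Tychonoff direct sum\<close>

lemma topspace_tychonoff_dsum: "topspace (tychonoff_dsum A) = dsum_carrier A"
  unfolding tychonoff_dsum_def dsum_carrier_def by auto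

lemma dsum_carrier_finite_support: "g \<in> dsum_carrier A \<Longrightarrow> finite {a\<in>A. g a \<noteq> 0}"
  unfolding dsum_carrier_def by auto

lemma dsum_carrier_undefined: "g \<in> dsum_carrier A \<Longrightarrow> a \<notin> A \<Longrightarrow> g a = undefined"
  unfolding dsum_carrier_def by (auto simp: PiE_def extensional_def)

lemma dsum_carrier_in_zspan: "g \<in> dsum_carrier A \<Longrightarrow> a \<in> A \<Longrightarrow> g a \<in> zspan {a}"
  unfolding dsum_carrier_def by auto

definition dsum_coeff :: "('a::real_vector \<Rightarrow> 'a) \<Rightarrow> 'a \<Rightarrow> int" where
  "dsum_coeff g a = (SOME k. g a = of_int k *\<^sub>R a)"

lemma dsum_coeff:
  assumes "g \<in> dsum_carrier A" "a \<in> A"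
  shows "g a = of_int (dsum_coeff g a) *\<^sub>R a"
proof -
  have "\<exists>k::int. g a = of_int k *\<^sub>R a"
    using dsum_carrier_in_zspan[OF assms] by (auto simp: zspan_singleton)
  then show ?thesis unfolding dsum_coeff_def by (rule someI_ex)
qed

lemma dsum_components_eqI:
  assumes "g \<in> dsum_carrier A" "h \<in> dsum_carrier A" "a \<in> A" "dsum_coeff h a = dsum_coeff g a"
  shows "h a = g a"
  using dsum_coeff[OF assms(1,3)] dsum_coeff[OF assms(2,3)] assms(4) by simp

lemma dsum_map_eq_sum:
  assumes "finite T" "{a\<in>A. g a \<noteq> 0} \<subseteq> T" "T \<subseteq> A"
  shows "dsum_map A g = (\<Sum>a\<in>T. g a)"
  unfolding dsum_map_def by (rule sum.mono_neutral_left) (use assms in auto)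

lemma dsum_component_diff:
  assumes "g \<in> dsum_carrier A" "h \<in> dsum_carrier A" "a \<in> A"
  shows "h a - g a = of_int (dsum_coeff h a - dsum_coeff g a) *\<^sub>R a"
  using dsum_coeff[OF assms(1,3)] dsum_coeff[OF assms(2,3)] by (simp add: scaleR_left_diff_distrib)

lemma dsum_map_diff:
  assumes "g \<in> dsum_carrier A" "h \<in> dsum_carrier A"
    and S: "finite S" "S \<subseteq> A" "{a\<in>A. g a \<noteq> 0} \<subseteq> S" "{a\<in>A. h a \<noteq> 0} \<subseteq> S"
  shows "dsum_map A h - dsum_map A g = (\<Sum>a\<in>S. of_int (dsum_coeff h a - dsum_coeff g a) *\<^sub>R a)"
proof -
  have "dsum_map A h - dsum_map A g = (\<Sum>a\<in>S. h a - g a)"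
    using dsum_map_eq_sum[of S A g] dsum_map_eq_sum[of S A h] S by (simp add: sum_subtractf)
  also have "\<dots> = (\<Sum>a\<in>S. of_int (dsum_coeff h a - dsum_coeff g a) *\<^sub>R a)"
    using S(2) dsum_component_diff[OF assms(1,2)] by (intro sum.cong) auto
  finally show ?thesis .
qed

definition dsum_of_comb :: "'a::real_vector set \<Rightarrow> 'a set \<Rightarrow> ('a \<Rightarrow> int) \<Rightarrow> 'a \<Rightarrow> 'a" where
  "dsum_of_comb A G m = restrict (\<lambda>b. if b \<in> G then of_int (m b) *\<^sub>R b else 0) A"

lemma dsum_of_comb_in_carrier: "finite G \<Longrightarrow> dsum_of_comb A G m \<in> dsum_carrier A"
  unfolding dsum_carrier_def dsum_of_comb_def
  by (auto simp: int_multiple_in_zspan_singleton zero_in_zspan intro: finite_subset[of _ G])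

lemma dsum_map_dsum_of_comb:
  assumes "finite G" "G \<subseteq> A"
  shows "dsum_map A (dsum_of_comb A G m) = (\<Sum>b\<in>G. of_int (m b) *\<^sub>R b)"
  using assms by (subst dsum_map_eq_sum[of G]) (auto simp: dsum_of_comb_def intro!: sum.cong)

lemma dsum_map_image: "dsum_map A ` dsum_carrier A = zspan A"
proof (intro antisym subsetI)
  fix y assume "y \<in> dsum_map A ` dsum_carrier A"
  then obtain g where g: "g \<in> dsum_carrier A" and y: "y = dsum_map A g" by blast
  let ?S = "{a\<in>A. g a \<noteq> 0}"
  have "y = (\<Sum>a\<in>?S. of_int (dsum_coeff g a) *\<^sub>R a)"
    unfolding y dsum_map_def using dsum_coeff[OF g] by (intro sum.cong) auto
  then show "y \<in> zspan A" using dsum_carrier_finite_support[OF g] by (auto intro: zspanI)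
next
  fix y assume "y \<in> zspan A"
  then obtain G m where G: "finite G" "G \<subseteq> A" and "y = (\<Sum>b\<in>G. of_int (m b) *\<^sub>R b)"
    by (rule zspanE)
  then have "y = dsum_map A (dsum_of_comb A G m)" by (simp add: dsum_map_dsum_of_comb)
  then show "y \<in> dsum_map A ` dsum_carrier A" using dsum_of_comb_in_carrier[OF G(1)] by (rule image_eqI)
qed

lemma dsum_map_in_zspan: "g \<in> dsum_carrier A \<Longrightarrow> dsum_map A g \<in> zspan A"
  using dsum_map_image[of A] by blast

lemma dsum_map_diff_in_zspan:
  assumes g: "g \<in> dsum_carrier A" and h: "h \<in> dsum_carrier A" and agree: "\<And>a. a \<in> F \<Longrightarrow> h a = g a"
  shows "dsum_map A h - dsum_map A g \<in> zspan (A - F)"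
proof -
  define S where "S = {a\<in>A. g a \<noteq> 0} \<union> {a\<in>A. h a \<noteq> 0}"
  have S: "finite S" "S \<subseteq> A"
    using dsum_carrier_finite_support[OF g] dsum_carrier_finite_support[OF h] by (auto simp: S_def)
  have "dsum_map A h - dsum_map A g = (\<Sum>a\<in>S. of_int (dsum_coeff h a - dsum_coeff g a) *\<^sub>R a)"
    by (rule dsum_map_diff[OF g h S]) (auto simp: S_def)
  also have "\<dots> = (\<Sum>a\<in>S - F. of_int (dsum_coeff h a - dsum_coeff g a) *\<^sub>R a)"
  proof -
    have "of_int (dsum_coeff h a - dsum_coeff g a) *\<^sub>R a = 0" if "a \<in> S \<inter> F" for a
      using that S(2) dsum_component_diff[OF g h, of a, symmetric] agree[of a] by auto
    then show ?thesis using S(1) by (intro sum.mono_neutral_right) auto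
  qed
  also have "\<dots> \<in> zspan (A - F)" using S by (intro zspanI) auto
  finally show ?thesis .
qed

lemma dsum_components_eq_if_diff_isolated:
  assumes U: "isolating_nhd A F U" and g: "g \<in> dsum_carrier A" and h: "h \<in> dsum_carrier A"
    and diff: "dsum_map A h - dsum_map A g \<in> U" and a: "a \<in> F"
  shows "h a = g a"
proof (cases "a \<in> A")
  case False
  then show ?thesis using dsum_carrier_undefined[OF g] dsum_carrier_undefined[OF h] by simp
next
  case True
  define S where "S = insert a ({b\<in>A. g b \<noteq> 0} \<union> {b\<in>A. h b \<noteq> 0})"
  have S: "finite S" "S \<subseteq> A"
    using True dsum_carrier_finite_support[OF g] dsum_carrier_finite_support[OF h] by (auto simp: S_def)
  have "dsum_map A h - dsum_map A g = (\<Sum>b\<in>S. of_int (dsum_coeff h b - dsum_coeff g b) *\<^sub>R b)"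
    by (rule dsum_map_diff[OF g h S]) (auto simp: S_def)
  with diff have "(\<Sum>b\<in>S. of_int (dsum_coeff h b - dsum_coeff g b) *\<^sub>R b) \<in> U" by simp
  then have "dsum_coeff h a - dsum_coeff g a = 0"
    by (rule isolating_nhd_coeff_eq_0[OF U S, where z = "\<lambda>b. dsum_coeff h b - dsum_coeff g b"])
      (simp_all add: S_def a)
  then show ?thesis using dsum_components_eqI[OF g h True] by simp
qed

lemma tychonoff_dsum_open_contains_cylinder:
  assumes P: "openin (tychonoff_dsum A) P" and g: "g \<in> P"
  obtains F where "finite F" "F \<subseteq> A" "{h \<in> dsum_carrier A. \<forall>a\<in>F. h a = g a} \<subseteq> P"
proof -
  obtain Q where Q: "openin (product_topology (\<lambda>a. top_of_set (zspan {a})) A) Q" "P = Q \<inter> dsum_carrier A"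
    using P unfolding tychonoff_dsum_def openin_subtopology by blast
  then obtain X where X: "g \<in> (\<Pi>\<^sub>E i\<in>A. X i)" "finite {i. X i \<noteq> zspan {i}}" "(\<Pi>\<^sub>E i\<in>A. X i) \<subseteq> Q"
    using product_topology_open_contains_basis[OF Q(1)] g by force
  define F where "F = {i \<in> A. X i \<noteq> zspan {i}}"
  show ?thesis
  proof (rule that[of F])
    show "finite F" using X(2) by (auto simp: F_def intro: finite_subset)
    show "F \<subseteq> A" by (auto simp: F_def)
    show "{h \<in> dsum_carrier A. \<forall>a\<in>F. h a = g a} \<subseteq> P"
    proof (intro subsetI, elim CollectE conjE)
      fix h assume h: "h \<in> dsum_carrier A" and agree: "\<forall>a\<in>F. h a = g a"
      have "h \<in> (\<Pi>\<^sub>E i\<in>A. X i)"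
      proof (rule PiE_I)
        fix i assume i: "i \<in> A"
        show "h i \<in> X i"
        proof (cases "i \<in> F")
          case True
          then show ?thesis using agree X(1) i by auto
        next
          case False
          then show ?thesis using dsum_carrier_in_zspan[OF h i] i by (simp add: F_def)
        qed
      qed (rule dsum_carrier_undefined[OF h])
      then show "h \<in> P" using X(3) Q(2) h by blast
    qed
  qed
qed

lemma openin_tychonoff_dsum_cylinder:
  assumes "finite F" "F \<subseteq> A" "\<And>a. a \<in> F \<Longrightarrow> open (V a)"
  shows "openin (tychonoff_dsum A) {h \<in> dsum_carrier A. \<forall>a\<in>F. h a \<in> V a}"
proof -
  define X where "X i = (if i \<in> F then zspan {i} \<inter> V i else zspan {i})" for i
  have "openin (product_topology (\<lambda>a. top_of_set (zspan {a})) A) (\<Pi>\<^sub>E i\<in>A. X i)"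
  proof (rule product_topology_basis)
    show "openin (top_of_set (zspan {i})) (X i)" for i
      using assms(3) by (auto simp: X_def)
    show "finite {i. X i \<noteq> topspace (top_of_set (zspan {i}))}"
      using assms(1) by (auto simp: X_def intro: finite_subset)
  qed
  then have "openin (tychonoff_dsum A) ((\<Pi>\<^sub>E i\<in>A. X i) \<inter> dsum_carrier A)"
    unfolding tychonoff_dsum_def by (rule openin_subtopology_Int)
  moreover have "(\<Pi>\<^sub>E i\<in>A. X i) \<inter> dsum_carrier A = {h \<in> dsum_carrier A. \<forall>a\<in>F. h a \<in> V a}"
    using assms(2) by (fastforce simp: X_def dsum_carrier_def PiE_iff extensional_def)
  ultimately show ?thesis by simp
qed

definition small_zspan_tails :: "'a::{real_vector,topological_space} set \<Rightarrow> bool" where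
  "small_zspan_tails A \<longleftrightarrow> (\<forall>W. open W \<and> 0 \<in> W \<longrightarrow> (\<exists>F. finite F \<and> F \<subseteq> A \<and> zspan (A - F) \<subseteq> W))"

lemma continuous_map_dsum_map_iff:
  "continuous_map (tychonoff_dsum A) (top_of_set (zspan A)) (dsum_map A) \<longleftrightarrow>
     (\<forall>V. open V \<longrightarrow> openin (tychonoff_dsum A) {g \<in> dsum_carrier A. dsum_map A g \<in> V})"
  (is "?cont \<longleftrightarrow> (\<forall>V. open V \<longrightarrow> openin _ (?pre V))")
proof -
  have pre: "{g \<in> topspace (tychonoff_dsum A). dsum_map A g \<in> zspan A \<inter> V} = ?pre V" for V
  proof (intro equalityI subsetI)
    fix g assume "g \<in> {g \<in> topspace (tychonoff_dsum A). dsum_map A g \<in> zspan A \<inter> V}"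
    then show "g \<in> ?pre V" by (simp add: topspace_tychonoff_dsum)
  next
    fix g assume "g \<in> ?pre V"
    then show "g \<in> {g \<in> topspace (tychonoff_dsum A). dsum_map A g \<in> zspan A \<inter> V}"
      using dsum_map_in_zspan[of g A] by (simp add: topspace_tychonoff_dsum)
  qed
  show ?thesis
  proof
    assume cont: ?cont
    show "\<forall>V. open V \<longrightarrow> openin (tychonoff_dsum A) (?pre V)"
    proof (intro allI impI)
      fix V :: "'a set" assume "open V"
      then have "openin (top_of_set (zspan A)) (zspan A \<inter> V)" by (rule openin_open_Int)
      from openin_continuous_map_preimage[OF cont this] show "openin (tychonoff_dsum A) (?pre V)"
        by (simp only: pre)
    qed
  next
    assume open_pre: "\<forall>V. open V \<longrightarrow> openin (tychonoff_dsum A) (?pre V)"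
    show ?cont unfolding continuous_map_def
    proof (intro conjI allI impI)
      show "dsum_map A \<in> topspace (tychonoff_dsum A) \<rightarrow> topspace (top_of_set (zspan A))"
        using dsum_map_in_zspan by (auto simp: topspace_tychonoff_dsum)
      fix U assume "openin (top_of_set (zspan A)) U"
      then obtain V where "open V" "U = zspan A \<inter> V" by (auto simp: openin_open)
      then show "openin (tychonoff_dsum A) {g \<in> topspace (tychonoff_dsum A). dsum_map A g \<in> U}"
        using open_pre pre by simp
    qed
  qed
qed

lemma small_zspan_tails_if_continuous:
  assumes "continuous_map (tychonoff_dsum A) (top_of_set (zspan A)) (dsum_map A)"
  shows "small_zspan_tails A"
  unfolding small_zspan_tails_def
proof (intro allI impI)
  fix W :: "'a set" assume W: "open W \<and> 0 \<in> W"
  define zero where "zero = dsum_of_comb A {} (\<lambda>_. 0)"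
  let ?P = "{g \<in> dsum_carrier A. dsum_map A g \<in> W}"
  have "openin (tychonoff_dsum A) ?P" using assms W by (simp add: continuous_map_dsum_map_iff)
  moreover have "zero \<in> ?P"
  proof -
    have "zero \<in> dsum_carrier A" unfolding zero_def by (rule dsum_of_comb_in_carrier) simp
    moreover have "dsum_map A zero = 0" using dsum_map_dsum_of_comb[of "{}" A] by (simp add: zero_def)
    ultimately show ?thesis using W by simp
  qed
  ultimately obtain F where F: "finite F" "F \<subseteq> A" "{h \<in> dsum_carrier A. \<forall>a\<in>F. h a = zero a} \<subseteq> ?P"
    by (rule tychonoff_dsum_open_contains_cylinder) (rule that)
  have "zspan (A - F) \<subseteq> W"
  proof
    fix z assume "z \<in> zspan (A - F)"
    then obtain G m where G: "finite G" "G \<subseteq> A - F" "z = (\<Sum>b\<in>G. of_int (m b) *\<^sub>R b)"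
      by (rule zspanE)
    have "dsum_of_comb A G m \<in> {h \<in> dsum_carrier A. \<forall>a\<in>F. h a = zero a}"
      using G(2) dsum_of_comb_in_carrier[OF G(1)] by (auto simp: dsum_of_comb_def zero_def)
    then have "dsum_of_comb A G m \<in> ?P" using F(3) by blast
    moreover have "dsum_map A (dsum_of_comb A G m) = z"
      using G dsum_map_dsum_of_comb[of G A m] by auto
    ultimately show "z \<in> W" by simp
  qed
  with F(1,2) show "\<exists>F. finite F \<and> F \<subseteq> A \<and> zspan (A - F) \<subseteq> W" by blast
qed

context
  assumes tvs: "tvs_ops_continuous TYPE('a::{real_vector,t1_space})"
begin

lemma continuous_map_dsum_map:
  fixes A :: "'a set"
  assumes ti: "top_independent A" and small: "small_zspan_tails A"
  shows "continuous_map (tychonoff_dsum A) (top_of_set (zspan A)) (dsum_map A)"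
  unfolding continuous_map_dsum_map_iff
proof (intro allI impI)
  fix V :: "'a set" assume V: "open V"
  let ?P = "{g \<in> dsum_carrier A. dsum_map A g \<in> V}"
  show "openin (tychonoff_dsum A) ?P"
  proof (subst openin_subopen, intro ballI)
    fix g assume "g \<in> ?P"
    then have g: "g \<in> dsum_carrier A" "dsum_map A g \<in> V" by auto
    define V0 where "V0 = (\<lambda>y. y + dsum_map A g) -` V"
    have "open V0" "0 \<in> V0" using tvs_open_translation_vimage[OF tvs V] g(2) by (auto simp: V0_def)
    then obtain F where F: "finite F" "F \<subseteq> A" "zspan (A - F) \<subseteq> V0"
      using small unfolding small_zspan_tails_def by blast
    obtain U where U: "isolating_nhd A F U" by (rule top_independent_isolating_nhd[OF tvs ti F(1,2)]) (rule that)
    define C where "C = {h \<in> dsum_carrier A. \<forall>a\<in>F. h a \<in> (\<lambda>y. y + - g a) -` U}"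
    have "openin (tychonoff_dsum A) C"
      unfolding C_def using F(1,2) U
      by (intro openin_tychonoff_dsum_cylinder tvs_open_translation_vimage[OF tvs]) (auto simp: isolating_nhd_def)
    moreover have "g \<in> C" using g(1) U by (simp add: C_def isolating_nhd_def)
    moreover have "C \<subseteq> ?P"
    proof
      fix h assume "h \<in> C"
      then have h: "h \<in> dsum_carrier A" and near: "\<And>a. a \<in> F \<Longrightarrow> h a - g a \<in> U"
        by (auto simp: C_def)
      have "h a = g a" if a: "a \<in> F" for a
      proof -
        have aA: "a \<in> A" using a F(2) by blast
        have "of_int (dsum_coeff h a - dsum_coeff g a) *\<^sub>R a \<in> U"
          using near[OF a] dsum_component_diff[OF g(1) h aA] by simp
        then have "dsum_coeff h a - dsum_coeff g a = 0" by (rule isolating_nhd_int_multiple[OF U aA a])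
        then show ?thesis using dsum_components_eqI[OF g(1) h aA] by simp
      qed
      then have "dsum_map A h - dsum_map A g \<in> V0" using dsum_map_diff_in_zspan[OF g(1) h] F(3) by blast
      then show "h \<in> ?P" using h by (simp add: V0_def)
    qed
    ultimately show "\<exists>T. openin (tychonoff_dsum A) T \<and> g \<in> T \<and> T \<subseteq> ?P" by blast
  qed
qed

lemma open_map_dsum_map:
  fixes A :: "'a set"
  assumes ti: "top_independent A"
  shows "open_map (tychonoff_dsum A) (top_of_set (zspan A)) (dsum_map A)"
  unfolding open_map_def
proof (intro allI impI)
  fix P assume P: "openin (tychonoff_dsum A) P"
  show "openin (top_of_set (zspan A)) (dsum_map A ` P)"
  proof (subst openin_subopen, intro ballI)
    fix y assume "y \<in> dsum_map A ` P"
    then obtain g where g: "g \<in> P" "y = dsum_map A g" by blast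
    have gc: "g \<in> dsum_carrier A"
      using openin_subset[OF P] g(1) by (auto simp: topspace_tychonoff_dsum)
    obtain F where F: "finite F" "F \<subseteq> A" "{h \<in> dsum_carrier A. \<forall>a\<in>F. h a = g a} \<subseteq> P"
      by (rule tychonoff_dsum_open_contains_cylinder[OF P g(1)]) (rule that)
    obtain U where U: "isolating_nhd A F U" by (rule top_independent_isolating_nhd[OF tvs ti F(1,2)]) (rule that)
    define T where "T = zspan A \<inter> (\<lambda>x. x + - y) -` U"
    have "openin (top_of_set (zspan A)) T"
      unfolding T_def using U by (intro openin_open_Int tvs_open_translation_vimage[OF tvs])
        (simp add: isolating_nhd_def)
    moreover have "y \<in> T" using g(2) gc dsum_map_image[of A] U by (auto simp: T_def isolating_nhd_def)
    moreover have "T \<subseteq> dsum_map A ` P"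
    proof
      fix y' assume "y' \<in> T"
      then have "y' \<in> zspan A" "y' - y \<in> U" by (auto simp: T_def)
      then obtain h where h: "h \<in> dsum_carrier A" "y' = dsum_map A h"
        and "dsum_map A h - dsum_map A g \<in> U"
        using dsum_map_image[of A] g(2) by (metis imageE)
      then have "h \<in> P" using F(3) dsum_components_eq_if_diff_isolated[OF U gc h(1)] by blast
      then show "y' \<in> dsum_map A ` P" using h(2) by blast
    qed
    ultimately show "\<exists>T. openin (top_of_set (zspan A)) T \<and> y \<in> T \<and> T \<subseteq> dsum_map A ` P" by blast
  qed
qed

lemma inj_on_dsum_map:
  fixes A :: "'a set"
  assumes ti: "top_independent A"
  shows "inj_on (dsum_map A) (dsum_carrier A)"
proof (rule inj_onI, rule ext)
  fix g h a assume g: "g \<in> dsum_carrier A" and h: "h \<in> dsum_carrier A" and eq: "dsum_map A g = dsum_map A h"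
  define S where "S = {a\<in>A. g a \<noteq> 0} \<union> {a\<in>A. h a \<noteq> 0}"
  have S: "finite S" "S \<subseteq> A"
    using dsum_carrier_finite_support[OF g] dsum_carrier_finite_support[OF h] by (auto simp: S_def)
  obtain U where U: "isolating_nhd A S U" by (rule top_independent_isolating_nhd[OF tvs ti S]) (rule that)
  have "h a = g a" if "a \<in> S"
    using dsum_components_eq_if_diff_isolated[OF U g h _ that] eq U by (simp add: isolating_nhd_def)
  then show "g a = h a"
    using dsum_carrier_undefined[OF g, of a] dsum_carrier_undefined[OF h, of a]
    by (cases "a \<in> A"; cases "g a = 0"; cases "h a = 0") (auto simp: S_def)
qed

lemma is_tychonoff_dsum_iff_small_zspan_tails:
  fixes A :: "'a set"
  assumes ti: "top_independent A"
  shows "is_tychonoff_dsum A \<longleftrightarrow> small_zspan_tails A"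
proof
  assume "is_tychonoff_dsum A"
  then show "small_zspan_tails A"
    unfolding is_tychonoff_dsum_def by (intro small_zspan_tails_if_continuous homeomorphic_imp_continuous_map)
next
  assume "small_zspan_tails A"
  then show "is_tychonoff_dsum A"
    unfolding is_tychonoff_dsum_def
    by (intro bijective_open_imp_homeomorphic_map continuous_map_dsum_map open_map_dsum_map ti)
      (simp_all add: topspace_tychonoff_dsum dsum_map_image inj_on_dsum_map[OF ti])
qed

end

section \<open>Small spans and continuous coordinates\<close>

lemma Dirichlet_approx_simult_finite_set:
  fixes G :: "'b set" and \<theta> :: "'b \<Rightarrow> real" and N :: nat
  assumes "finite G" "N > 0"
  obtains q p where "0 < q" "q \<le> int (N ^ card G)" "\<And>b. b \<in> G \<Longrightarrow> \<bar>of_int q * \<theta> b - of_int (p b)\<bar> < 1 / N"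
proof -
  obtain e where e: "bij_betw e {0..<card G} G" using ex_bij_betw_nat_finite[OF assms(1)] by blast
  obtain q p where qp: "0 < q" "q \<le> int (N ^ card G)"
    "\<And>i. i < card G \<Longrightarrow> \<bar>of_int q * (\<theta> \<circ> e) i - of_int (p i)\<bar> < 1 / N"
    using Dirichlet_approx_simult[OF assms(2), where \<theta> = "\<theta> \<circ> e" and n = "card G"] by blast
  show ?thesis
  proof (rule that[OF qp(1,2)])
    fix b assume b: "b \<in> G"
    let ?i = "inv_into {0..<card G} e b"
    have "?i \<in> {0..<card G}" using b e by (metis bij_betw_def inv_into_into)
    moreover have "e ?i = b" using b e by (rule bij_betw_inv_into_right[rotated])
    ultimately show "\<bar>of_int q * \<theta> b - of_int ((p \<circ> inv_into {0..<card G} e) b)\<bar> < 1 / N"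
      using qp(3)[of ?i] by simp
  qed
qed

lemma sum_scaleR_floor_split:
  fixes c :: "'a::real_vector \<Rightarrow> real"
  assumes "n \<noteq> 0"
  shows "(\<Sum>b\<in>G. c b *\<^sub>R b) =
    (1 / n) *\<^sub>R (\<Sum>b\<in>G. of_int \<lfloor>n * c b\<rfloor> *\<^sub>R b) + (\<Sum>b\<in>G. ((n * c b - of_int \<lfloor>n * c b\<rfloor>) / n) *\<^sub>R b)"
  using assms
  by (simp add: scaleR_sum_right flip: sum.distrib scaleR_add_left) (simp add: field_simps)

definition small_span_tails :: "'a::{real_vector,topological_space} set \<Rightarrow> bool" where
  "small_span_tails A \<longleftrightarrow> (\<forall>W. open W \<and> 0 \<in> W \<longrightarrow> (\<exists>F. finite F \<and> F \<subseteq> A \<and> span (A - F) \<subseteq> W))"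

context
  assumes tvs: "tvs_ops_continuous TYPE('a::{real_vector,topological_space})"
begin

lemma small_span_tails_if_small_zspan_tails:
  fixes A :: "'a set"
  assumes "small_zspan_tails A"
  shows "small_span_tails A"
  unfolding small_span_tails_def
proof (intro allI impI)
  fix W :: "'a set" assume "open W \<and> 0 \<in> W"
  then obtain N where N: "open N" "0 \<in> N" "\<And>x y. x \<in> N \<Longrightarrow> y \<in> N \<Longrightarrow> x + y \<in> W"
    using tvs_add_nhds[OF tvs] by blast
  obtain Q where Q: "open Q" "0 \<in> Q" "\<And>s y. \<bar>s\<bar> \<le> 1 \<Longrightarrow> y \<in> Q \<Longrightarrow> s *\<^sub>R y \<in> N"
    using tvs_bounded_scaleR_nhds[OF tvs N(1,2)] by blast
  obtain F where F: "finite F" "F \<subseteq> A" "zspan (A - F) \<subseteq> Q"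
    using assms Q(1,2) unfolding small_zspan_tails_def by blast
  have "span (A - F) \<subseteq> W"
  proof
    fix x assume "x \<in> span (A - F)"
    then obtain G c where G: "finite G" "G \<subseteq> A - F" and x: "x = (\<Sum>b\<in>G. c b *\<^sub>R b)"
      unfolding span_explicit by blast
    obtain e where e: "e > 0" "\<And>r. (\<And>b. b \<in> G \<Longrightarrow> \<bar>r b\<bar> < e) \<Longrightarrow> (\<Sum>b\<in>G. r b *\<^sub>R b) \<in> N"
      using tvs_small_combinations[OF tvs G(1) N(1,2)] by blast
    obtain k :: nat where k: "inverse (real (Suc k)) < e" using reals_Archimedean[OF e(1)] by blast
    define n where "n = real (Suc k)"
    have n: "n \<ge> 1" "1 / n < e" using k by (simp_all add: n_def inverse_eq_divide)
    \<comment> \<open>\<open>x\<close> is \<open>1/n\<close> times an integer combination plus a combination with coefficients below \<open>1/n\<close>\<close>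
    have "(\<Sum>b\<in>G. of_int \<lfloor>n * c b\<rfloor> *\<^sub>R b) \<in> zspan (A - F)" using G by (intro zspanI)
    with F(3) have "(\<Sum>b\<in>G. of_int \<lfloor>n * c b\<rfloor> *\<^sub>R b) \<in> Q" by blast
    then have "(1 / n) *\<^sub>R (\<Sum>b\<in>G. of_int \<lfloor>n * c b\<rfloor> *\<^sub>R b) \<in> N" using n(1) by (intro Q(3)) auto
    moreover have "(\<Sum>b\<in>G. ((n * c b - of_int \<lfloor>n * c b\<rfloor>) / n) *\<^sub>R b) \<in> N"
    proof (rule e(2))
      fix b
      have "0 \<le> n * c b - of_int \<lfloor>n * c b\<rfloor>" "n * c b - of_int \<lfloor>n * c b\<rfloor> < 1" by linarith+
      then have "\<bar>(n * c b - of_int \<lfloor>n * c b\<rfloor>) / n\<bar> < 1 / n" using n(1) by (simp add: divide_strict_right_mono)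
      then show "\<bar>(n * c b - of_int \<lfloor>n * c b\<rfloor>) / n\<bar> < e" using n(2) by linarith
    qed
    ultimately show "x \<in> W" using N(3) sum_scaleR_floor_split[of n c G] n(1) x by simp
  qed
  with F(1,2) show "\<exists>F. finite F \<and> F \<subseteq> A \<and> span (A - F) \<subseteq> W" by blast
qed

lemma tvs_dirichlet_nhd:
  fixes G N :: "'a set"
  assumes "finite G" "open N" "0 \<in> N"
  obtains Q where "open Q" "0 \<in> Q"
    "\<And>x c t. x \<in> Q \<Longrightarrow> 1 \<le> \<bar>c\<bar> \<Longrightarrow> \<exists>q::int. \<exists>p::'a \<Rightarrow> int. q > 0 \<and> (of_int q / c) *\<^sub>R x \<in> N \<and>
       (\<Sum>b\<in>G. (of_int (p b) - of_int q * t b / c) *\<^sub>R b) \<in> N"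
proof -
  obtain \<delta> where \<delta>: "\<delta> > 0" "\<And>r. (\<And>b. b \<in> G \<Longrightarrow> \<bar>r b\<bar> < \<delta>) \<Longrightarrow> (\<Sum>b\<in>G. r b *\<^sub>R b) \<in> N"
    using tvs_small_combinations[OF tvs assms] by blast
  obtain k :: nat where k: "inverse (real (Suc k)) < \<delta>" using reals_Archimedean[OF \<delta>(1)] by blast
  define K where "K = real (Suc k ^ card G)"
  obtain Q where Q: "open Q" "0 \<in> Q" "\<And>s y. \<bar>s\<bar> \<le> K \<Longrightarrow> y \<in> Q \<Longrightarrow> s *\<^sub>R y \<in> N"
    by (rule tvs_bounded_scaleR_nhds[OF tvs assms(2,3)]) (rule that)
  have "\<exists>q::int. \<exists>p::'a \<Rightarrow> int. q > 0 \<and> (of_int q / c) *\<^sub>R x \<in> N \<and>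
       (\<Sum>b\<in>G. (of_int (p b) - of_int q * t b / c) *\<^sub>R b) \<in> N" if x: "x \<in> Q" and c: "1 \<le> \<bar>c\<bar>" for x c t
  proof -
    obtain q p where qp: "0 < q" "of_int q \<le> K" "\<And>b. b \<in> G \<Longrightarrow> \<bar>of_int q * (t b / c) - of_int (p b)\<bar> < 1 / Suc k"
    proof (rule Dirichlet_approx_simult_finite_set[OF assms(1), of "Suc k" "\<lambda>b. t b / c"])
      fix q p assume q: "0 < q" "q \<le> int (Suc k ^ card G)"
        and p: "\<And>b. b \<in> G \<Longrightarrow> \<bar>of_int q * (t b / c) - of_int (p b)\<bar> < 1 / Suc k"
      have "of_int q \<le> K" unfolding K_def using q(2) by (metis of_int_le_iff of_int_of_nat_eq)
      then show thesis by (rule that[OF q(1) _ p])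
    qed simp
    have "\<bar>of_int q / c\<bar> \<le> of_int q" using c qp(1) by (simp add: abs_div_pos divide_le_eq mult_le_cancel_left1)
    with qp(2) have "\<bar>of_int q / c\<bar> \<le> K" by linarith
    then have "(of_int q / c) *\<^sub>R x \<in> N" using Q(3) x by blast
    moreover have "(\<Sum>b\<in>G. (of_int (p b) - of_int q * t b / c) *\<^sub>R b) \<in> N"
      using qp(3) k by (intro \<delta>(2)) (fastforce simp: inverse_eq_divide abs_minus_commute)
    ultimately show ?thesis using qp(1) by blast
  qed
  with Q(1,2) show ?thesis by (rule that)
qed

end

lemma sum_scaleR_split_at:
  fixes u :: "'a::real_vector \<Rightarrow> real"
  assumes "finite H" "finite F" "a \<in> H" "a \<in> F"
  shows "(\<Sum>b\<in>H. u b *\<^sub>R b) =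
    u a *\<^sub>R a + (\<Sum>b\<in>F - {a}. (if b \<in> H then u b else 0) *\<^sub>R b) + (\<Sum>b\<in>H - F. u b *\<^sub>R b)"
proof -
  have "(\<Sum>b\<in>H. u b *\<^sub>R b) = (\<Sum>b\<in>F \<inter> H. u b *\<^sub>R b) + (\<Sum>b\<in>H - F. u b *\<^sub>R b)"
    using sum.Int_Diff[OF assms(1), of _ F] by (simp add: Int_commute)
  also have "(\<Sum>b\<in>F \<inter> H. u b *\<^sub>R b) = (\<Sum>b\<in>F. (if b \<in> H then u b else 0) *\<^sub>R b)"
    using sum.inter_restrict[OF assms(2), of "\<lambda>b. u b *\<^sub>R b" H] by (auto intro: sum.cong)
  also have "\<dots> = u a *\<^sub>R a + (\<Sum>b\<in>F - {a}. (if b \<in> H then u b else 0) *\<^sub>R b)"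
    using sum.remove[OF assms(2,4), of "\<lambda>b. (if b \<in> H then u b else 0) *\<^sub>R b"] assms(3) by simp
  finally show ?thesis .
qed

lemma rescaled_combination_eq:
  fixes a r :: "'a::real_vector"
  assumes "c \<noteq> 0"
  shows "(q / c) *\<^sub>R (c *\<^sub>R a + (\<Sum>b\<in>G. t b *\<^sub>R b) + r) + (- (q / c)) *\<^sub>R r
           + (\<Sum>b\<in>G. (p b - q * t b / c) *\<^sub>R b)
         = q *\<^sub>R a + (\<Sum>b\<in>G. p b *\<^sub>R b)"
proof -
  have "(q / c) *\<^sub>R (\<Sum>b\<in>G. t b *\<^sub>R b) + (\<Sum>b\<in>G. (p b - q * t b / c) *\<^sub>R b) = (\<Sum>b\<in>G. p b *\<^sub>R b)"
    by (simp add: scaleR_sum_right scaleR_diff_left sum_subtractf)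
  with assms show ?thesis by (simp add: scaleR_add_right algebra_simps)
qed

lemma isolating_nhd_int_combination:
  assumes U: "isolating_nhd A {a} U" and G: "finite G" "G \<subseteq> A" "a \<in> A" "a \<notin> G"
    and comb: "of_int q *\<^sub>R a + (\<Sum>b\<in>G. of_int (p b) *\<^sub>R b) \<in> U"
  shows "q = 0"
proof -
  define z where "z b = (if b = a then q else p b)" for b
  have "(\<Sum>b\<in>insert a G. of_int (z b) *\<^sub>R b) = of_int q *\<^sub>R a + (\<Sum>b\<in>G. of_int (p b) *\<^sub>R b)"
    using G by (auto simp: z_def intro!: sum.cong)
  with comb have "(\<Sum>b\<in>insert a G. of_int (z b) *\<^sub>R b) \<in> U" by simp
  then have "z a = 0" using G by (intro isolating_nhd_coeff_eq_0[OF U, of "insert a G" z a]) auto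
  then show ?thesis by (simp add: z_def)
qed

lemma sum_representation_superset:
  assumes "independent A" "w \<in> span A" "finite H" "{b. representation A w b \<noteq> 0} \<subseteq> H"
  shows "(\<Sum>b\<in>H. representation A w b *\<^sub>R b) = w"
proof -
  have "(\<Sum>b\<in>H. representation A w b *\<^sub>R b) = (\<Sum>b | representation A w b \<noteq> 0. representation A w b *\<^sub>R b)"
    using assms(3,4) by (intro sum.mono_neutral_right) auto
  also have "\<dots> = w" using real_vector.sum_nonzero_representation_eq[OF assms(1,2)] .
  finally show ?thesis .
qed

lemma linear_on_zero: "subspace X \<Longrightarrow> linear_on X f \<Longrightarrow> f 0 = 0"
  unfolding linear_on_def using subspace_0[of X] by (metis mult_zero_left scale_zero_left)

lemma linear_on_diff:
  assumes "subspace X" "linear_on X f" "x \<in> X" "y \<in> X"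
  shows "f (y - x) = f y - f x"
proof -
  have "f y = f ((y - x) + x)" by simp
  also have "\<dots> = f (y - x) + f x" using assms subspace_diff[OF assms(1,4,3)] unfolding linear_on_def by blast
  finally show ?thesis by simp
qed

lemma linear_on_sum:
  assumes "subspace X" "linear_on X f" "finite H" "H \<subseteq> X"
  shows "f (\<Sum>b\<in>H. r b *\<^sub>R b) = (\<Sum>b\<in>H. r b * f b)"
  using assms(3,4)
proof (induction H rule: finite_induct)
  case empty
  then show ?case using linear_on_zero[OF assms(1,2)] by simp
next
  case (insert b H)
  have "r b *\<^sub>R b \<in> X" "(\<Sum>b\<in>H. r b *\<^sub>R b) \<in> X"
    using insert.prems assms(1) by (auto intro: subspace_scale subspace_sum)
  then have "f (r b *\<^sub>R b + (\<Sum>b\<in>H. r b *\<^sub>R b)) = r b * f b + f (\<Sum>b\<in>H. r b *\<^sub>R b)"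
    using assms(2) insert.prems unfolding linear_on_def by simp
  then show ?case using insert by simp
qed

lemma linear_on_representation:
  assumes "independent A"
  shows "linear_on (span A) (\<lambda>y. representation A y a)"
  unfolding linear_on_def
  using real_vector.representation_add[OF assms] real_vector.representation_scale[OF assms] by simp

context
  assumes tvs: "tvs_ops_continuous TYPE('a::{real_vector,topological_space})"
begin

lemma tvs_linear_on_continuous_if_bounded:
  fixes X Q :: "'a set"
  assumes X: "subspace X" "linear_on X f" and Q: "open Q" "0 \<in> Q" "\<And>w. w \<in> X \<Longrightarrow> w \<in> Q \<Longrightarrow> \<bar>f w\<bar> < 1"
  shows "continuous_on X f"
  unfolding continuous_on_topological
proof (intro ballI allI impI)
  fix x B assume x: "x \<in> X" and B: "open B" "f x \<in> B"
  obtain e where e: "e > 0" "ball (f x) e \<subseteq> B" using B openE by blast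
  define N where "N = (\<lambda>y. (1 / e) *\<^sub>R y + (- (1 / e) *\<^sub>R x)) -` Q"
  have "f y \<in> B" if y: "y \<in> X" "y \<in> N" for y
  proof -
    have "(1 / e) *\<^sub>R (y - x) \<in> X" using X(1) x y(1) by (intro subspace_scale subspace_diff)
    moreover have "(1 / e) *\<^sub>R (y - x) \<in> Q" using y(2) by (simp add: N_def scaleR_diff_right)
    ultimately have "\<bar>f ((1 / e) *\<^sub>R (y - x))\<bar> < 1" by (rule Q(3))
    moreover have "f ((1 / e) *\<^sub>R (y - x)) = (f y - f x) / e"
      using X x y(1) subspace_diff[OF X(1) y(1) x] linear_on_diff[OF X x y(1)]
      unfolding linear_on_def by simp
    ultimately have "\<bar>f y - f x\<bar> < e" using e(1) by (simp add: divide_less_eq)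
    then show ?thesis using e(2) by (auto simp: dist_real_def)
  qed
  moreover have "open N" unfolding N_def by (rule tvs_open_affine_vimage[OF tvs Q(1)])
  moreover have "x \<in> N" using Q(2) by (simp add: N_def)
  ultimately show "\<exists>N. open N \<and> x \<in> N \<and> (\<forall>y\<in>X. y \<in> N \<longrightarrow> f y \<in> B)" by blast
qed

end

context
  assumes tvs: "tvs_ops_continuous TYPE('a::{real_vector,t1_space})"
begin

lemma small_span_tails_coeff_bound:
  fixes A :: "'a set"
  assumes ti: "top_independent A" and small: "small_span_tails A" and a: "a \<in> A"
  obtains Q where "open Q" "0 \<in> Q"
    "\<And>H u. finite H \<Longrightarrow> H \<subseteq> A \<Longrightarrow> a \<in> H \<Longrightarrow> (\<Sum>b\<in>H. u b *\<^sub>R b) \<in> Q \<Longrightarrow> \<bar>u a\<bar> < 1"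
proof -
  have "finite {a}" "{a} \<subseteq> A" using a by auto
  then obtain U where U: "isolating_nhd A {a} U" by (rule top_independent_isolating_nhd[OF tvs ti]) (rule that)
  then have "open U" "0 \<in> U" by (simp_all add: isolating_nhd_def)
  then obtain N where N: "open N" "0 \<in> N" "\<And>x y z. x \<in> N \<Longrightarrow> y \<in> N \<Longrightarrow> z \<in> N \<Longrightarrow> x + y + z \<in> U"
    by (rule tvs_add3_nhds[OF tvs]) (rule that)
  obtain F where F: "finite F" "F \<subseteq> A" "span (A - F) \<subseteq> N"
    using small N(1,2) unfolding small_span_tails_def by blast
  have aF: "a \<in> F"
  proof (rule ccontr)
    assume "a \<notin> F"
    then have "a \<in> N" using a F(3) span_base[of a "A - F"] by blast
    then have "of_int 1 *\<^sub>R a \<in> U" using N(3)[of a 0 0] N(2) by simp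
    then show False using isolating_nhd_int_multiple[OF U a] by fastforce
  qed
  have G: "finite (F - {a})" "F - {a} \<subseteq> A" "a \<notin> F - {a}" using F(1,2) by auto
  obtain Q where Q: "open Q" "0 \<in> Q"
    "\<And>x c t. x \<in> Q \<Longrightarrow> 1 \<le> \<bar>c\<bar> \<Longrightarrow> \<exists>q::int. \<exists>p::'a \<Rightarrow> int. q > 0 \<and> (of_int q / c) *\<^sub>R x \<in> N \<and>
       (\<Sum>b\<in>F - {a}. (of_int (p b) - of_int q * t b / c) *\<^sub>R b) \<in> N"
    by (rule tvs_dirichlet_nhd[OF tvs G(1) N(1,2)]) (rule that)
  have "\<bar>u a\<bar> < 1" if H: "finite H" "H \<subseteq> A" "a \<in> H" "(\<Sum>b\<in>H. u b *\<^sub>R b) \<in> Q" for H u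
  proof (rule ccontr)
    assume "\<not> \<bar>u a\<bar> < 1"
    then have c: "1 \<le> \<bar>u a\<bar>" "u a \<noteq> 0" by auto
    define t where "t b = (if b \<in> H then u b else 0)" for b
    define r where "r = (\<Sum>b\<in>H - F. u b *\<^sub>R b)"
    have y: "(\<Sum>b\<in>H. u b *\<^sub>R b) = u a *\<^sub>R a + (\<Sum>b\<in>F - {a}. t b *\<^sub>R b) + r"
      unfolding t_def r_def by (rule sum_scaleR_split_at[OF H(1) F(1) H(3) aF])
    have "r \<in> span (A - F)" unfolding r_def using H(2) by (intro span_sum span_scale span_base) auto
    obtain q p where qp: "q > 0" "(of_int q / u a) *\<^sub>R (\<Sum>b\<in>H. u b *\<^sub>R b) \<in> N"
        "(\<Sum>b\<in>F - {a}. (of_int (p b) - of_int q * t b / u a) *\<^sub>R b) \<in> N"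
      using Q(3)[OF H(4) c(1), of t] by blast
    \<comment> \<open>rescaling by \<open>q / u a\<close> turns the \<open>a\<close>-coefficient into the integer \<open>q\<close>; Dirichlet makes the
      other coefficients in \<open>F\<close> nearly integral, and the tail in \<open>span (A - F)\<close> is small anyway\<close>
    have "- (of_int q / u a) *\<^sub>R r \<in> N" using F(3) span_scale[OF \<open>r \<in> span (A - F)\<close>] by blast
    then have "(of_int q / u a) *\<^sub>R (\<Sum>b\<in>H. u b *\<^sub>R b) + - (of_int q / u a) *\<^sub>R r
        + (\<Sum>b\<in>F - {a}. (of_int (p b) - of_int q * t b / u a) *\<^sub>R b) \<in> U"
      by (rule N(3)[OF qp(2) _ qp(3)])
    then have "of_int q *\<^sub>R a + (\<Sum>b\<in>F - {a}. of_int (p b) *\<^sub>R b) \<in> U"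
      unfolding y rescaled_combination_eq[OF c(2)] .
    then have "q = 0" by (rule isolating_nhd_int_combination[OF U G(1,2) a G(3)])
    with qp(1) show False by simp
  qed
  with Q(1,2) show ?thesis by (rule that)
qed

lemma independent_if_small_span_tails:
  fixes A :: "'a set"
  assumes ti: "top_independent A" and small: "small_span_tails A"
  shows "independent A"
proof
  assume "dependent A"
  then obtain S u v where S: "finite S" "S \<subseteq> A" "(\<Sum>v\<in>S. u v *\<^sub>R v) = 0" "v \<in> S" "u v \<noteq> 0"
    unfolding real_vector.dependent_explicit by blast
  have "v \<in> A" using S(2,4) by blast
  then obtain Q where Q: "open Q" "0 \<in> Q"
    "\<And>H u. finite H \<Longrightarrow> H \<subseteq> A \<Longrightarrow> v \<in> H \<Longrightarrow> (\<Sum>b\<in>H. u b *\<^sub>R b) \<in> Q \<Longrightarrow> \<bar>u v\<bar> < 1"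
    by (rule small_span_tails_coeff_bound[OF ti small]) (rule that)
  \<comment> \<open>a vanishing combination can be rescaled to have arbitrarily large coefficients\<close>
  have "(\<Sum>b\<in>S. (2 / \<bar>u v\<bar> * u b) *\<^sub>R b) = (2 / \<bar>u v\<bar>) *\<^sub>R (\<Sum>b\<in>S. u b *\<^sub>R b)"
    by (simp add: scaleR_sum_right)
  also have "\<dots> = 0" using S(3) by simp
  finally have "\<bar>2 / \<bar>u v\<bar> * u v\<bar> < 1"
    using Q(2) S(1,2,4) by (intro Q(3)[of S "\<lambda>b. 2 / \<bar>u v\<bar> * u b"]) simp_all
  with S(5) show False by (simp add: abs_mult)
qed

lemma representation_in_cont_lin_functionals:
  fixes A :: "'a set"
  assumes ti: "top_independent A" and small: "small_span_tails A" and a: "a \<in> A"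
  shows "(\<lambda>y. representation A y a) \<in> cont_lin_functionals (span A)"
proof -
  have ind: "independent A" by (rule independent_if_small_span_tails[OF ti small])
  obtain Q where Q: "open Q" "0 \<in> Q"
    "\<And>H u. finite H \<Longrightarrow> H \<subseteq> A \<Longrightarrow> a \<in> H \<Longrightarrow> (\<Sum>b\<in>H. u b *\<^sub>R b) \<in> Q \<Longrightarrow> \<bar>u a\<bar> < 1"
    by (rule small_span_tails_coeff_bound[OF ti small a]) (rule that)
  have "\<bar>representation A w a\<bar> < 1" if "w \<in> span A" "w \<in> Q" for w
  proof (rule Q(3))
    let ?H = "insert a {b. representation A w b \<noteq> 0}"
    show "finite ?H" using real_vector.finite_representation by simp
    show "?H \<subseteq> A" using a real_vector.representation_ne_zero by auto
    have "(\<Sum>b\<in>?H. representation A w b *\<^sub>R b) = w"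
      using real_vector.finite_representation by (intro sum_representation_superset[OF ind \<open>w \<in> span A\<close>]) auto
    with \<open>w \<in> Q\<close> show "(\<Sum>b\<in>?H. representation A w b *\<^sub>R b) \<in> Q" by simp
  qed simp
  then have "continuous_on (span A) (\<lambda>y. representation A y a)"
    using tvs_linear_on_continuous_if_bounded[OF tvs subspace_span linear_on_representation[OF ind] Q(1,2)]
    by blast
  then show ?thesis using linear_on_representation[OF ind] by (simp add: cont_lin_functionals_def)
qed

end

section \<open>Weak topologies\<close>

definition weak_subbasis :: "'a::{real_vector,topological_space} set \<Rightarrow> 'a set set" where
  "weak_subbasis X = {X \<inter> f -` V | f V. f \<in> cont_lin_functionals X \<and> open V}"

lemma weak_topology_on_generated:
  "weak_topology_on X \<longleftrightarrow> top_of_set X = topology_generated_by (weak_subbasis X)"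
  unfolding weak_topology_on_def weak_subbasis_def ..

lemma openin_if_generate_weak_subbasis:
  assumes "generate_topology_on (weak_subbasis X) S"
  shows "openin (top_of_set X) S"
  using assms
proof (induction rule: generate_topology_on.induct)
  case (Basis s)
  then obtain f V where "s = X \<inter> f -` V" "f \<in> cont_lin_functionals X" "open V"
    unfolding weak_subbasis_def by blast
  then show ?case by (auto simp: cont_lin_functionals_def intro: continuous_openin_preimage_gen)
qed (auto intro: openin_Int openin_Union)

lemma generate_weak_subbasis_box:
  assumes "finite \<Phi>" "\<Phi> \<subseteq> cont_lin_functionals X"
  shows "generate_topology_on (weak_subbasis X) {y \<in> X. \<forall>g\<in>\<Phi>. \<bar>g y - g x\<bar> < \<delta>}"
  using assms
proof (induction \<Phi> rule: finite_induct)
  case empty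
  have "(\<lambda>_. 0) \<in> cont_lin_functionals X" by (simp add: cont_lin_functionals_def linear_on_def)
  then have "X \<inter> (\<lambda>_. 0::real) -` UNIV \<in> weak_subbasis X" unfolding weak_subbasis_def by blast
  then show ?case by (auto intro: generate_topology_on.Basis)
next
  case (insert g \<Phi>)
  have "X \<inter> g -` ball (g x) \<delta> \<in> weak_subbasis X" using insert.prems unfolding weak_subbasis_def by blast
  moreover have "generate_topology_on (weak_subbasis X) {y \<in> X. \<forall>g\<in>\<Phi>. \<bar>g y - g x\<bar> < \<delta>}"
    using insert.IH insert.prems by simp
  ultimately have "generate_topology_on (weak_subbasis X)
      ({y \<in> X. \<forall>g\<in>\<Phi>. \<bar>g y - g x\<bar> < \<delta>} \<inter> (X \<inter> g -` ball (g x) \<delta>))"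
    by (simp add: generate_topology_on.Int generate_topology_on.Basis)
  moreover have "{y \<in> X. \<forall>g\<in>\<Phi>. \<bar>g y - g x\<bar> < \<delta>} \<inter> (X \<inter> g -` ball (g x) \<delta>)
      = {y \<in> X. \<forall>g'\<in>insert g \<Phi>. \<bar>g' y - g' x\<bar> < \<delta>}"
    by (auto simp: dist_real_def abs_minus_commute)
  ultimately show ?case by simp
qed

lemma generate_weak_subbasis_contains_box:
  assumes "generate_topology_on (weak_subbasis X) S" "x \<in> S"
  shows "\<exists>\<Phi> \<delta>. finite \<Phi> \<and> \<Phi> \<subseteq> cont_lin_functionals X \<and> \<delta> > 0 \<and> {y \<in> X. \<forall>g\<in>\<Phi>. \<bar>g y - g x\<bar> < \<delta>} \<subseteq> S"
  using assms
proof (induction arbitrary: x rule: generate_topology_on.induct)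
  case (Int a b)
  then have "x \<in> a" "x \<in> b" by auto
  obtain \<Phi>1 \<delta>1 where 1: "finite \<Phi>1" "\<Phi>1 \<subseteq> cont_lin_functionals X" "\<delta>1 > 0"
      "{y \<in> X. \<forall>g\<in>\<Phi>1. \<bar>g y - g x\<bar> < \<delta>1} \<subseteq> a"
    using Int.IH(1)[OF \<open>x \<in> a\<close>] by blast
  obtain \<Phi>2 \<delta>2 where 2: "finite \<Phi>2" "\<Phi>2 \<subseteq> cont_lin_functionals X" "\<delta>2 > 0"
      "{y \<in> X. \<forall>g\<in>\<Phi>2. \<bar>g y - g x\<bar> < \<delta>2} \<subseteq> b"
    using Int.IH(2)[OF \<open>x \<in> b\<close>] by blast
  show ?case by (rule exI[of _ "\<Phi>1 \<union> \<Phi>2"], rule exI[of _ "min \<delta>1 \<delta>2"]) (use 1 2 in auto)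
next
  case (UN K)
  from UN.prems obtain k where "k \<in> K" "x \<in> k" by blast
  then obtain \<Phi> \<delta> where "finite \<Phi>" "\<Phi> \<subseteq> cont_lin_functionals X" "\<delta> > 0"
      "{y \<in> X. \<forall>g\<in>\<Phi>. \<bar>g y - g x\<bar> < \<delta>} \<subseteq> k"
    using UN.IH[OF \<open>k \<in> K\<close> \<open>x \<in> k\<close>] by blast
  with \<open>k \<in> K\<close> show ?case by blast
next
  case (Basis s)
  then obtain f V where fV: "s = X \<inter> f -` V" "f \<in> cont_lin_functionals X" "open V"
    unfolding weak_subbasis_def by blast
  then obtain e where e: "e > 0" "ball (f x) e \<subseteq> V" using Basis.prems openE by blast
  with fV show ?case
    by (intro exI[of _ "{f}"] exI[of _ e])
      (auto simp: dist_real_def abs_minus_commute intro!: subsetD[OF e(2)])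
qed simp

lemma generate_weak_subbasis_if_contains_boxes:
  assumes "S \<subseteq> X"
    and "\<And>x. x \<in> S \<Longrightarrow> \<exists>\<Phi> \<delta>. finite \<Phi> \<and> \<Phi> \<subseteq> cont_lin_functionals X \<and> \<delta> > 0 \<and>
           {y \<in> X. \<forall>g\<in>\<Phi>. \<bar>g y - g x\<bar> < \<delta>} \<subseteq> S"
  shows "generate_topology_on (weak_subbasis X) S"
proof -
  have "\<exists>B. generate_topology_on (weak_subbasis X) B \<and> x \<in> B \<and> B \<subseteq> S" if x: "x \<in> S" for x
  proof -
    obtain \<Phi> \<delta> where \<Phi>: "finite \<Phi>" "\<Phi> \<subseteq> cont_lin_functionals X" "\<delta> > 0"
      "{y \<in> X. \<forall>g\<in>\<Phi>. \<bar>g y - g x\<bar> < \<delta>} \<subseteq> S"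
      using assms(2)[OF x] by (elim exE conjE) (rule that)
    show ?thesis
    proof (intro exI conjI)
      show "generate_topology_on (weak_subbasis X) {y \<in> X. \<forall>g\<in>\<Phi>. \<bar>g y - g x\<bar> < \<delta>}"
        using \<Phi>(1,2) by (rule generate_weak_subbasis_box)
    qed (use \<Phi>(3,4) x assms(1) in auto)
  qed
  then obtain B where B: "\<And>x. x \<in> S \<Longrightarrow> generate_topology_on (weak_subbasis X) (B x) \<and> x \<in> B x \<and> B x \<subseteq> S"
    by metis
  have "generate_topology_on (weak_subbasis X) (\<Union>(B ` S))"
    using B by (intro generate_topology_on.UN) auto
  moreover have "\<Union>(B ` S) = S" using B by blast
  ultimately show ?thesis by simp
qed

lemma weak_topology_on_iff_nhds:
  "weak_topology_on X \<longleftrightarrow>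
     (\<forall>x\<in>X. \<forall>T. open T \<and> x \<in> T \<longrightarrow> (\<exists>\<Phi> \<delta>. finite \<Phi> \<and> \<Phi> \<subseteq> cont_lin_functionals X \<and> \<delta> > 0 \<and>
        {y \<in> X. \<forall>g\<in>\<Phi>. \<bar>g y - g x\<bar> < \<delta>} \<subseteq> T))"
  (is "_ \<longleftrightarrow> ?nhds")
proof
  assume "weak_topology_on X"
  then have gen: "generate_topology_on (weak_subbasis X) (X \<inter> T)" if "open T" for T
    using that openin_topology_generated_by_iff
    by (metis openin_open_Int weak_topology_on_generated)
  show ?nhds
  proof (intro ballI allI impI)
    fix x T assume "x \<in> X" "open T \<and> x \<in> T"
    then have "generate_topology_on (weak_subbasis X) (X \<inter> T)" "x \<in> X \<inter> T" using gen by auto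
    from generate_weak_subbasis_contains_box[OF this] obtain \<Phi> \<delta> where \<Phi>: "finite \<Phi>"
        "\<Phi> \<subseteq> cont_lin_functionals X" "\<delta> > 0" "{y \<in> X. \<forall>g\<in>\<Phi>. \<bar>g y - g x\<bar> < \<delta>} \<subseteq> X \<inter> T"
      by (elim exE conjE) (rule that)
    then show "\<exists>\<Phi> \<delta>. finite \<Phi> \<and> \<Phi> \<subseteq> cont_lin_functionals X \<and> \<delta> > 0 \<and>
        {y \<in> X. \<forall>g\<in>\<Phi>. \<bar>g y - g x\<bar> < \<delta>} \<subseteq> T"
      by (intro exI[of _ \<Phi>] exI[of _ \<delta>]) auto
  qed
next
  assume nhds: ?nhds
  have "generate_topology_on (weak_subbasis X) S" if S: "openin (top_of_set X) S" for S
  proof -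
    obtain T where T: "open T" "S = X \<inter> T"
      using S unfolding openin_open by (elim exE conjE) (rule that)
    show ?thesis
    proof (rule generate_weak_subbasis_if_contains_boxes)
      fix x assume x: "x \<in> S"
      then have "x \<in> X" "open T \<and> x \<in> T" using T by auto
      from nhds[rule_format, OF this] obtain \<Phi> \<delta> where \<Phi>: "finite \<Phi>" "\<Phi> \<subseteq> cont_lin_functionals X"
        "\<delta> > 0" "{y \<in> X. \<forall>g\<in>\<Phi>. \<bar>g y - g x\<bar> < \<delta>} \<subseteq> T"
        by (elim exE conjE) (rule that)
      then show "\<exists>\<Phi> \<delta>. finite \<Phi> \<and> \<Phi> \<subseteq> cont_lin_functionals X \<and> \<delta> > 0 \<and>
          {y \<in> X. \<forall>g\<in>\<Phi>. \<bar>g y - g x\<bar> < \<delta>} \<subseteq> S"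
        using T(2) by (intro exI[of _ \<Phi>] exI[of _ \<delta>]) auto
    qed (use T in auto)
  qed
  then show "weak_topology_on X"
    unfolding weak_topology_on_generated topology_eq openin_topology_generated_by_iff
    using openin_if_generate_weak_subbasis by blast
qed

lemma weak_topology_on_nhd_0:
  assumes "weak_topology_on X" "subspace X" "open U" "0 \<in> U"
  obtains \<Phi> \<delta> where "finite \<Phi>" "\<Phi> \<subseteq> cont_lin_functionals X" "\<delta> > 0"
    "\<And>y. y \<in> X \<Longrightarrow> (\<forall>g\<in>\<Phi>. \<bar>g y\<bar> < \<delta>) \<Longrightarrow> y \<in> U"
proof -
  have "0 \<in> X" "open U \<and> 0 \<in> U" using assms(2-4) subspace_0 by auto
  from assms(1)[unfolded weak_topology_on_iff_nhds, rule_format, OF this]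
  obtain \<Phi> \<delta> where \<Phi>: "finite \<Phi>" "\<Phi> \<subseteq> cont_lin_functionals X" "\<delta> > 0"
    "{y \<in> X. \<forall>g\<in>\<Phi>. \<bar>g y - g 0\<bar> < \<delta>} \<subseteq> U"
    by (elim exE conjE) (rule that)
  have g0: "g 0 = 0" if "g \<in> \<Phi>" for g
    using that \<Phi>(2) linear_on_zero[OF assms(2)] by (auto simp: cont_lin_functionals_def)
  show ?thesis
  proof (rule that[OF \<Phi>(1-3)])
    fix y assume y: "y \<in> X" "\<forall>g\<in>\<Phi>. \<bar>g y\<bar> < \<delta>"
    have "\<bar>g y - g 0\<bar> < \<delta>" if "g \<in> \<Phi>" for g using that g0[OF that] y(2) by simp
    with y(1) have "y \<in> {y \<in> X. \<forall>g\<in>\<Phi>. \<bar>g y - g 0\<bar> < \<delta>}" by blast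
    then show "y \<in> U" using \<Phi>(4) by blast
  qed
qed

lemma span_representation_split:
  assumes "independent A" "w \<in> span A" "finite F"
  shows "w - (\<Sum>b\<in>F. representation A w b *\<^sub>R b) \<in> span (A - F)"
proof -
  define H where "H = F \<union> {b. representation A w b \<noteq> 0}"
  have H: "finite H" "{b. representation A w b \<noteq> 0} \<subseteq> H" "F \<subseteq> H"
    using assms(3) real_vector.finite_representation by (auto simp: H_def)
  have "w = (\<Sum>b\<in>H. representation A w b *\<^sub>R b)"
    by (rule sum_representation_superset[OF assms(1,2) H(1,2), symmetric])
  also have "\<dots> = (\<Sum>b\<in>H - F. representation A w b *\<^sub>R b) + (\<Sum>b\<in>F. representation A w b *\<^sub>R b)"
    by (rule sum.subset_diff[OF H(3,1)])
  finally have "(\<Sum>b\<in>H - F. representation A w b *\<^sub>R b) + (\<Sum>b\<in>F. representation A w b *\<^sub>R b) = w"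
    by (rule sym)
  then have "w - (\<Sum>b\<in>F. representation A w b *\<^sub>R b) = (\<Sum>b\<in>H - F. representation A w b *\<^sub>R b)"
    by (rule add_implies_diff[symmetric])
  also have "\<dots> \<in> span (A - F)"
    using real_vector.representation_ne_zero by (intro span_sum span_scale) (auto simp: H_def intro: span_base)
  finally show ?thesis .
qed

context
  assumes tvs: "tvs_ops_continuous TYPE('a::{real_vector,t1_space})"
begin

lemma weak_topology_if_small_span_tails:
  fixes A :: "'a set"
  assumes ti: "top_independent A" and small: "small_span_tails A"
  shows "weak_topology_on (span A)"
  unfolding weak_topology_on_iff_nhds
proof (intro ballI allI impI)
  fix x T assume x: "x \<in> span A" and T: "open T \<and> x \<in> T"
  have ind: "independent A" by (rule independent_if_small_span_tails[OF tvs ti small])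
  have "open ((\<lambda>y. y + x) -` T)" "0 \<in> (\<lambda>y. y + x) -` T"
    using T tvs_open_translation_vimage[OF tvs] by auto
  then obtain N where N: "open N" "0 \<in> N" "\<And>u v. u \<in> N \<Longrightarrow> v \<in> N \<Longrightarrow> u + v + x \<in> T"
    by (rule tvs_add_nhds[OF tvs]) (simp add: that)
  obtain F where F: "finite F" "F \<subseteq> A" "span (A - F) \<subseteq> N"
    using small N(1,2) unfolding small_span_tails_def by blast
  obtain \<delta> where \<delta>: "\<delta> > 0" "\<And>r. (\<And>b. b \<in> F \<Longrightarrow> \<bar>r b\<bar> < \<delta>) \<Longrightarrow> (\<Sum>b\<in>F. r b *\<^sub>R b) \<in> N"
    using tvs_small_combinations[OF tvs F(1) N(1,2)] by blast
  define \<Phi> where "\<Phi> = (\<lambda>a y. representation A y a) ` F"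
  have "{y \<in> span A. \<forall>g\<in>\<Phi>. \<bar>g y - g x\<bar> < \<delta>} \<subseteq> T"
  proof
    fix y assume "y \<in> {y \<in> span A. \<forall>g\<in>\<Phi>. \<bar>g y - g x\<bar> < \<delta>}"
    then have y: "y \<in> span A" "\<And>b. b \<in> F \<Longrightarrow> \<bar>representation A y b - representation A x b\<bar> < \<delta>"
      by (auto simp: \<Phi>_def)
    define w where "w = y - x"
    have w: "w \<in> span A" using x y(1) by (simp add: w_def span_diff)
    have "representation A w b = representation A y b - representation A x b" for b
      using real_vector.representation_diff[OF ind x y(1)] by (simp add: w_def)
    then have "(\<Sum>b\<in>F. representation A w b *\<^sub>R b) \<in> N" using y(2) by (intro \<delta>(2)) simp
    moreover have "w - (\<Sum>b\<in>F. representation A w b *\<^sub>R b) \<in> N"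
      using span_representation_split[OF ind w F(1)] F(3) by blast
    ultimately have "(\<Sum>b\<in>F. representation A w b *\<^sub>R b) + (w - (\<Sum>b\<in>F. representation A w b *\<^sub>R b)) + x \<in> T"
      by (rule N(3))
    then show "y \<in> T" by (simp add: w_def)
  qed
  moreover have "finite \<Phi>" "\<Phi> \<subseteq> cont_lin_functionals (span A)"
    using F(1,2) representation_in_cont_lin_functionals[OF tvs ti small] by (auto simp: \<Phi>_def)
  ultimately show "\<exists>\<Phi> \<delta>. finite \<Phi> \<and> \<Phi> \<subseteq> cont_lin_functionals (span A) \<and> \<delta> > 0 \<and>
      {y \<in> span A. \<forall>g\<in>\<Phi>. \<bar>g y - g x\<bar> < \<delta>} \<subseteq> T"
    using \<delta>(1) by blast
qed

end

section \<open>Continuous functionals in a weak topology\<close>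

lemma homogeneous_system_nontrivial_solution:
  fixes M :: "'i \<Rightarrow> 'j \<Rightarrow> real"
  assumes "finite I" "finite J" "card I < card J"
  obtains c where "\<exists>j\<in>J. c j \<noteq> 0" "\<And>i. i \<in> I \<Longrightarrow> (\<Sum>j\<in>J. M i j * c j) = 0"
  using assms
proof (induction I arbitrary: J M thesis rule: finite_induct)
  case empty
  then obtain j where "j \<in> J" by fastforce
  then show ?case by (intro empty.prems(1)[of "\<lambda>x. if x = j then 1 else 0"]) auto
next
  case (insert i I)
  show ?case
  proof (cases "\<forall>j\<in>J. M i j = 0")
    case True
    have "card I < card J" using insert by simp
    then obtain c where c: "\<exists>j\<in>J. c j \<noteq> 0" "\<And>i'. i' \<in> I \<Longrightarrow> (\<Sum>j\<in>J. M i' j * c j) = 0"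
      using insert.IH[OF _ insert.prems(2)] by blast
    show ?thesis using c True by (intro insert.prems(1)[of c]) auto
  next
    case False
    then obtain j0 where j0: "j0 \<in> J" "M i j0 \<noteq> 0" by blast
    \<comment> \<open>Gaussian elimination of the unknown \<open>c j0\<close> using equation \<open>i\<close>\<close>
    define J' where "J' = J - {j0}"
    have J: "J = insert j0 J'" "j0 \<notin> J'" "finite J'" "card I < card J'"
      using j0(1) insert by (auto simp: J'_def)
    obtain c' where c': "\<exists>j\<in>J'. c' j \<noteq> 0"
      "\<And>i'. i' \<in> I \<Longrightarrow> (\<Sum>j\<in>J'. (M i' j - M i' j0 * M i j / M i j0) * c' j) = 0"
      using insert.IH[where J = J' and M = "\<lambda>i' j. M i' j - M i' j0 * M i j / M i j0"] J(3,4) by blast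
    define c where "c j = (if j = j0 then - (\<Sum>j\<in>J'. M i j * c' j) / M i j0 else c' j)" for j
    have sum_c: "(\<Sum>j\<in>J. N j * c j) = N j0 * c j0 + (\<Sum>j\<in>J'. N j * c' j)" for N :: "'j \<Rightarrow> real"
      using J by (auto simp: c_def intro!: sum.cong)
    show ?thesis
    proof (rule insert.prems(1)[of c])
      show "\<exists>j\<in>J. c j \<noteq> 0" using c'(1) J by (auto simp: c_def)
      fix i' assume "i' \<in> insert i I"
      then consider "i' = i" | "i' \<in> I" by blast
      then show "(\<Sum>j\<in>J. M i' j * c j) = 0"
      proof cases
        case 1
        then show ?thesis using sum_c[of "M i"] j0(2) by (simp add: c_def)
      next
        case 2
        then show ?thesis using sum_c[of "M i'"] c'(2)[OF 2] j0(2)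
          by (simp add: c_def algebra_simps sum_subtractf sum_distrib_left sum_divide_distrib)
      qed
    qed
  qed
qed

lemma abs_sum_mult_le:
  fixes e M :: "'b \<Rightarrow> real"
  assumes "\<And>b. b \<in> H \<Longrightarrow> \<bar>e b\<bar> \<le> \<epsilon>"
  shows "\<bar>\<Sum>b\<in>H. e b * M b\<bar> \<le> \<epsilon> * (\<Sum>b\<in>H. \<bar>M b\<bar>)"
proof -
  have "\<bar>\<Sum>b\<in>H. e b * M b\<bar> \<le> (\<Sum>b\<in>H. \<bar>e b\<bar> * \<bar>M b\<bar>)"
    using sum_abs[of "\<lambda>b. e b * M b" H] by (simp add: abs_mult)
  also have "\<dots> \<le> (\<Sum>b\<in>H. \<epsilon> * \<bar>M b\<bar>)" using assms by (intro sum_mono mult_right_mono) auto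
  also have "\<dots> = \<epsilon> * (\<Sum>b\<in>H. \<bar>M b\<bar>)" by (simp add: sum_distrib_left)
  finally show ?thesis .
qed

lemma integer_approx_kernel:
  fixes M :: "'g \<Rightarrow> 'b \<Rightarrow> real" and \<theta> :: "'b \<Rightarrow> real" and n :: nat
  assumes \<Phi>: "finite \<Phi>" and H: "finite H" "b0 \<in> H" and \<theta>: "\<theta> b0 = 1" "\<And>g. g \<in> \<Phi> \<Longrightarrow> (\<Sum>b\<in>H. \<theta> b * M g b) = 0"
    and \<delta>: "\<delta> > 0"
  obtains z :: "'b \<Rightarrow> int" where "real n \<le> of_int (z b0)" "\<And>g. g \<in> \<Phi> \<Longrightarrow> \<bar>\<Sum>b\<in>H. of_int (z b) * M g b\<bar> < \<delta>"
proof -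
  define C where "C = (\<Sum>g\<in>\<Phi>. \<Sum>b\<in>H. \<bar>M g b\<bar>) + 1"
  have C: "(\<Sum>b\<in>H. \<bar>M g b\<bar>) \<le> C" if "g \<in> \<Phi>" for g
    using member_le_sum[OF that _ \<Phi>, of "\<lambda>g. \<Sum>b\<in>H. \<bar>M g b\<bar>"] by (simp add: C_def sum_nonneg)
  define N where "N = nat \<lceil>real n * C / \<delta>\<rceil> + 2"
  have "real n * C / \<delta> < real N" unfolding N_def by linarith
  then have N: "N \<ge> 2" "real n * C < \<delta> * N"
    using \<delta> by (auto simp: N_def divide_less_eq mult.commute)
  obtain q p where qp: "0 < q" "\<And>b. b \<in> H \<Longrightarrow> \<bar>of_int q * \<theta> b - of_int (p b)\<bar> < 1 / N"
  proof (rule Dirichlet_approx_simult_finite_set[OF H(1), of N \<theta>])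
    fix q p assume q: "0 < q" "q \<le> int (N ^ card H)"
      and p: "\<And>b. b \<in> H \<Longrightarrow> \<bar>of_int q * \<theta> b - of_int (p b)\<bar> < 1 / N"
    show thesis by (rule that[OF q(1) p])
  qed (use N(1) in simp)
  have "\<bar>of_int (q - p b0)\<bar> < (1::real)"
    using qp(2)[OF H(2)] \<theta>(1) N(1) by (simp add: order_less_le_trans[of _ "1 / N"])
  then have pb0: "p b0 = q" by linarith
  define z where "z b = int n * p b" for b
  show ?thesis
  proof (rule that[of z])
    have "real n * 1 \<le> real n * of_int q" using qp(1) by (intro mult_left_mono) auto
    then show "real n \<le> of_int (z b0)" by (simp add: z_def pb0)
    fix g assume g: "g \<in> \<Phi>"
    have "\<bar>\<Sum>b\<in>H. (of_int (p b) - of_int q * \<theta> b) * M g b\<bar> \<le> 1 / N * (\<Sum>b\<in>H. \<bar>M g b\<bar>)"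
      using qp(2) by (intro abs_sum_mult_le) (simp add: abs_minus_commute less_imp_le)
    also have "\<dots> \<le> 1 / N * C" using C[OF g] by (rule mult_left_mono) simp
    finally have est: "\<bar>\<Sum>b\<in>H. (of_int (p b) - of_int q * \<theta> b) * M g b\<bar> \<le> 1 / N * C" .
    \<comment> \<open>\<open>z\<close> is \<open>n\<close> times an integer approximation of the kernel vector \<open>q \<theta>\<close>\<close>
    have "(\<Sum>b\<in>H. of_int (z b) * M g b) = real n * (\<Sum>b\<in>H. (of_int (p b) - of_int q * \<theta> b) * M g b)"
      using \<theta>(2)[OF g]
      by (simp add: z_def algebra_simps sum_subtractf sum_distrib_left flip: sum_distrib_left)
    then have "\<bar>\<Sum>b\<in>H. of_int (z b) * M g b\<bar> = real n * \<bar>\<Sum>b\<in>H. (of_int (p b) - of_int q * \<theta> b) * M g b\<bar>"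
      by (simp add: abs_mult)
    also have "\<dots> \<le> real n * (1 / N * C)" using est by (rule mult_left_mono) simp
    also have "\<dots> < \<delta>" using N by (simp add: divide_less_eq)
    finally show "\<bar>\<Sum>b\<in>H. of_int (z b) * M g b\<bar> < \<delta>" .
  qed
qed

lemma weak_nhd_contains_large_int_combinations:
  assumes weak: "weak_topology_on (span A)" and U: "open U" "0 \<in> U" and B: "B \<subseteq> A" "infinite B"
  obtains b0 where "b0 \<in> B"
    "\<And>n::nat. \<exists>H z. finite H \<and> H \<subseteq> B \<and> b0 \<in> H \<and> real n \<le> of_int (z b0) \<and>
       (\<Sum>b\<in>H. of_int (z b) *\<^sub>R b) \<in> U"
proof -
  obtain \<Phi> \<delta> where \<Phi>: "finite \<Phi>" "\<Phi> \<subseteq> cont_lin_functionals (span A)" "\<delta> > 0"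
    "\<And>y. y \<in> span A \<Longrightarrow> (\<forall>g\<in>\<Phi>. \<bar>g y\<bar> < \<delta>) \<Longrightarrow> y \<in> U"
    by (rule weak_topology_on_nhd_0[OF weak subspace_span U]) (rule that)
  obtain H where H: "H \<subseteq> B" "finite H" "card H = Suc (card \<Phi>)"
    using infinite_arbitrarily_large[OF B(2)] by blast
  \<comment> \<open>more elements than functionals: some nontrivial real combination on \<open>H\<close> is killed by all of \<open>\<Phi>\<close>\<close>
  obtain c where c: "\<exists>b\<in>H. c b \<noteq> 0" "\<And>g. g \<in> \<Phi> \<Longrightarrow> (\<Sum>b\<in>H. g b * c b) = 0"
    using homogeneous_system_nontrivial_solution[OF \<Phi>(1) H(2), of "\<lambda>g b. g b"] H(3) by auto
  then obtain b0 where b0: "b0 \<in> H" "c b0 \<noteq> 0" by blast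
  define \<theta> where "\<theta> b = c b / c b0" for b
  have \<theta>1: "\<theta> b0 = 1" using b0(2) by (simp add: \<theta>_def)
  have \<theta>2: "(\<Sum>b\<in>H. \<theta> b * g b) = 0" if "g \<in> \<Phi>" for g
    using c(2)[OF that] by (simp add: \<theta>_def sum_divide_distrib[symmetric] mult.commute)
  have HA: "H \<subseteq> span A" using H(1) B(1) span_base by blast
  show ?thesis
  proof (rule that)
    show "b0 \<in> B" using b0(1) H(1) by blast
    fix n :: nat
    obtain z where z: "real n \<le> of_int (z b0)" "\<And>g. g \<in> \<Phi> \<Longrightarrow> \<bar>\<Sum>b\<in>H. of_int (z b) * g b\<bar> < \<delta>"
      by (rule integer_approx_kernel[where M = "\<lambda>g b. g b" and n = n, OF \<Phi>(1) H(2) b0(1) \<theta>1 \<theta>2 \<Phi>(3)])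
        (assumption | rule that)+
    have "g (\<Sum>b\<in>H. of_int (z b) *\<^sub>R b) = (\<Sum>b\<in>H. of_int (z b) * g b)" if "g \<in> \<Phi>" for g
      using that \<Phi>(2) by (intro linear_on_sum[OF subspace_span _ H(2) HA]) (auto simp: cont_lin_functionals_def)
    moreover have "(\<Sum>b\<in>H. of_int (z b) *\<^sub>R b) \<in> span A" using HA by (intro span_sum span_scale) auto
    ultimately have "(\<Sum>b\<in>H. of_int (z b) *\<^sub>R b) \<in> U" using z(2) by (intro \<Phi>(4)) auto
    then show "\<exists>H z. finite H \<and> H \<subseteq> B \<and> b0 \<in> H \<and> real n \<le> of_int (z b0) \<and>
       (\<Sum>b\<in>H. of_int (z b) *\<^sub>R b) \<in> U"
      using H(1,2) b0(1) z(1) by blast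
  qed
qed

lemma finite_support_if_weak_topology:
  assumes ti: "top_independent A" and weak: "weak_topology_on (span A)"
    and f: "f \<in> cont_lin_functionals (span A)"
  shows "finite {a\<in>A. f a \<noteq> 0}"
proof (rule ccontr)
  assume inf: "infinite {a\<in>A. f a \<noteq> 0}"
  have f_lin: "linear_on (span A) f" and "continuous_on (span A) f"
    using f by (auto simp: cont_lin_functionals_def)
  then have "openin (top_of_set (span A)) (span A \<inter> f -` {-1<..<1})"
    by (intro continuous_openin_preimage_gen) auto
  then obtain W where W: "open W" "span A \<inter> f -` {-1<..<1} = span A \<inter> W"
    unfolding openin_open by (elim exE conjE) (rule that)
  have "0 \<in> span A \<inter> f -` {-1<..<1}" using linear_on_zero[OF subspace_span f_lin] span_zero by simp
  then have "0 \<in> W" unfolding W(2) by simp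
  then obtain U where U: "open U" "0 \<in> U"
    "\<And>H z a. finite H \<Longrightarrow> H \<subseteq> A \<Longrightarrow> (\<Sum>b\<in>H. of_int (z b) *\<^sub>R b) \<in> U \<Longrightarrow> a \<in> H \<Longrightarrow>
       of_int (z a) *\<^sub>R a \<in> W"
    by (rule top_independentE[OF ti W(1)]) (rule that)
  obtain b0 where b0: "b0 \<in> {a\<in>A. f a \<noteq> 0}"
    "\<And>n::nat. \<exists>H z. finite H \<and> H \<subseteq> {a\<in>A. f a \<noteq> 0} \<and> b0 \<in> H \<and> real n \<le> of_int (z b0) \<and>
       (\<Sum>b\<in>H. of_int (z b) *\<^sub>R b) \<in> U"
    by (rule weak_nhd_contains_large_int_combinations[OF weak U(1,2) _ inf]) auto
  \<comment> \<open>topological independence makes the large multiples \<open>z b0 \<cdot> b0\<close> lie in \<open>W\<close>, where \<open>|f| < 1\<close>\<close>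
  have bound: "real n * \<bar>f b0\<bar> < 1" for n :: nat
  proof -
    obtain H z where H: "finite H" "H \<subseteq> A" "b0 \<in> H" "real n \<le> of_int (z b0)"
      "(\<Sum>b\<in>H. of_int (z b) *\<^sub>R b) \<in> U"
      using b0(2)[of n] by blast
    then have "of_int (z b0) *\<^sub>R b0 \<in> span A \<inter> W"
      using U(3) b0(1) by (auto intro: span_scale span_base)
    then have "\<bar>f (of_int (z b0) *\<^sub>R b0)\<bar> < 1" using W(2) by (auto simp: abs_less_iff)
    moreover have "f (of_int (z b0) *\<^sub>R b0) = of_int (z b0) * f b0"
      using f_lin b0(1) span_base unfolding linear_on_def by blast
    ultimately have "\<bar>of_int (z b0)\<bar> * \<bar>f b0\<bar> < 1" by (simp add: abs_mult)
    moreover have "real n * \<bar>f b0\<bar> \<le> \<bar>of_int (z b0)\<bar> * \<bar>f b0\<bar>" using H(4) by (intro mult_right_mono) auto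
    ultimately show ?thesis by linarith
  qed
  obtain n :: nat where "1 / \<bar>f b0\<bar> < real n" using reals_Archimedean2 by blast
  then have "1 < real n * \<bar>f b0\<bar>" using b0(1) by (auto simp: divide_less_eq mult.commute)
  with bound[of n] show False by linarith
qed

lemma small_zspan_tails_if_weak_topology:
  fixes A :: "'a::{real_vector,topological_space} set"
  assumes ti: "top_independent A" and weak: "weak_topology_on (span A)"
  shows "small_zspan_tails A"
  unfolding small_zspan_tails_def
proof (intro allI impI)
  fix W :: "'a set" assume "open W \<and> 0 \<in> W"
  then have "open W" "0 \<in> W" by auto
  then obtain \<Phi> \<delta> where \<Phi>: "finite \<Phi>" "\<Phi> \<subseteq> cont_lin_functionals (span A)" "\<delta> > 0"
    "\<And>y. y \<in> span A \<Longrightarrow> (\<forall>g\<in>\<Phi>. \<bar>g y\<bar> < \<delta>) \<Longrightarrow> y \<in> W"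
    by (rule weak_topology_on_nhd_0[OF weak subspace_span]) (rule that)
  define F where "F = (\<Union>g\<in>\<Phi>. {a\<in>A. g a \<noteq> 0})"
  have F: "finite F" "F \<subseteq> A"
    using \<Phi>(1,2) finite_support_if_weak_topology[OF ti weak] by (auto simp: F_def)
  have "zspan (A - F) \<subseteq> W"
  proof
    fix x assume "x \<in> zspan (A - F)"
    then obtain G m where G: "finite G" "G \<subseteq> A - F" and x: "x = (\<Sum>b\<in>G. of_int (m b) *\<^sub>R b)"
      by (rule zspanE)
    have GA: "G \<subseteq> span A" using G(2) span_base by blast
    have "\<bar>g x\<bar> < \<delta>" if "g \<in> \<Phi>" for g
    proof -
      have "g x = (\<Sum>b\<in>G. of_int (m b) * g b)"
        unfolding x using that \<Phi>(2)
        by (intro linear_on_sum[OF subspace_span _ G(1) GA]) (auto simp: cont_lin_functionals_def)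
      also have "\<dots> = 0" using that G(2) by (intro sum.neutral) (auto simp: F_def)
      finally show ?thesis using \<Phi>(3) by simp
    qed
    moreover have "x \<in> span A" unfolding x using GA by (intro span_sum span_scale) auto
    ultimately show "x \<in> W" by (intro \<Phi>(4)) auto
  qed
  with F show "\<exists>F. finite F \<and> F \<subseteq> A \<and> zspan (A - F) \<subseteq> W" by blast
qed

theorem theorem2p9:
  fixes A :: "'a::{real_vector,t2_space} set"
  assumes "tvs_ops_continuous TYPE('a)"
    and "top_independent A"
  shows "is_tychonoff_dsum A \<longleftrightarrow> weak_topology_on (span A)"
proof -
  have "is_tychonoff_dsum A \<longleftrightarrow> small_zspan_tails A"
    by (rule is_tychonoff_dsum_iff_small_zspan_tails[OF assms])
  also have "\<dots> \<longleftrightarrow> weak_topology_on (span A)"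
  proof
    assume "small_zspan_tails A"
    then have "small_span_tails A" by (rule small_span_tails_if_small_zspan_tails[OF assms(1)])
    then show "weak_topology_on (span A)" by (rule weak_topology_if_small_span_tails[OF assms])
  next
    assume "weak_topology_on (span A)"
    then show "small_zspan_tails A" by (rule small_zspan_tails_if_weak_topology[OF assms(2)])
  qed
  finally show ?thesis .
qed

end
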